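(* For any two grapheurs $\mathsf M,\mathsf N\in\mathcal M$ and any $k\in\mathbb N$, $W_1(\mathsf G_k[\mathsf M],\mathsf G_k[\mathsf N])\le k^2\,W_\square(\mathsf M,\mathsf N)$ and $W_\square(\mathsf M,\mathsf N)\le W_1(\mathsf G_k[\mathsf M],\mathsf G_k[\mathsf N])+\frac4k$.
   Context: Let $\lambda$, $\lambda^2$ be Lebesgue measure on $[0,1]$ and $[0,1]^2$, and $\lambda_D$ the uniform probability measure on the diagonal of $[0,1]^2$. A grapheur is a random probability measure on $[0,1]^2$ of the form $\mathsf M=\sum_{i,j\in\mathbb N}E_{i,j}\delta_{(T_i,T_j)}+\sum_{i}[\sigma_i(\delta_{T_i}\otimes\lambda)+\varsigma_i(\lambda\otimes\delta_{T_i})]+\theta\lambda^2+\vartheta\lambda_D$ with $T_i$ iid uniform on $[0,1]$ and deterministic $E\in\mathbb R_{\ge0}^{\mathbb N\times\mathbb N}$, $\sigma,\varsigma\in\mathbb R^{\mathbb N}_{\ge0}$, $\theta,\vartheta\ge0$ summing in total to $1$; $\mathcal M$ is the set of grapheurs. $W_\square(\mathsf M_1,\mathsf M_2)=\inf\sup_{S,T\subseteq[0,1]\text{ intervals}}\mathbb E|\mathsf M_1'(S\times T)-\mathsf M_2'(S\times T)|$, infimum over couplings $(\mathsf M_1',\mathsf M_2')$ of $\mathsf M_1,\mathsf M_2$. $\mathsf G_k[\mathsf M]$ is the random $k\times k$ matrix with entries $\mathsf M(I_i^{(k)}\times I_j^{(k)})$, $I_i^{(k)}=[(i-1)/k,i/k)$.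 For random matrices $X,Y\in\mathbb R^{k\times k}$, $W_1(X,Y)=\inf\mathbb E\|X'-Y'\|_1$ over couplings, with $\|\cdot\|_1$ the entrywise $\ell_1$ norm. *)

theory Defs
  imports "HOL-Probability.Probability"
begin

definition sq_space :: "(real \<times> real) measure" where
  "sq_space = restrict_space borel ({0..1} \<times> {0..1})"

definition grapheur_params ::
  "(nat \<Rightarrow> nat \<Rightarrow> real) \<Rightarrow> (nat \<Rightarrow> real) \<Rightarrow> (nat \<Rightarrow> real) \<Rightarrow> real \<Rightarrow> real \<Rightarrow> bool" where
  "grapheur_params E \<sigma> \<sigma>' \<theta> \<phi> \<longleftrightarrow>
     (\<forall>i j. 0 \<le> E i j) \<and> (\<forall>i. 0 \<le> \<sigma> i) \<and> (\<forall>i. 0 \<le> \<sigma>' i) \<and> 0 \<le> \<theta> \<and> 0 \<le> \<phi> \<and>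
     (\<lambda>(i,j). E i j) summable_on UNIV \<and> \<sigma> summable_on UNIV \<and> \<sigma>' summable_on UNIV \<and>
     (\<Sum>\<^sub>\<infinity>(i,j). E i j) + (\<Sum>\<^sub>\<infinity>i. \<sigma> i) + (\<Sum>\<^sub>\<infinity>i. \<sigma>' i) + \<theta> + \<phi> = 1"

text \<open>The (deterministic) measure obtained for a realisation t = (T_i) of the points:
  sum_{i,j} E_ij delta_(t_i,t_j) + sum_i [sigma_i (delta_(t_i) x lambda) + varsigma_i (lambda x delta_(t_i))]
  + theta lambda^2 + vartheta lambda_D.\<close>
definition grapheur_at ::
  "(nat \<Rightarrow> nat \<Rightarrow> real) \<Rightarrow> (nat \<Rightarrow> real) \<Rightarrow> (nat \<Rightarrow> real) \<Rightarrow> real \<Rightarrow> real \<Rightarrow> (nat \<Rightarrow> real)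
     \<Rightarrow> (real \<times> real) measure" where
  "grapheur_at E \<sigma> \<sigma>' \<theta> \<phi> t = measure_of (space sq_space) (sets sq_space)
     (\<lambda>A. (\<Sum>i. \<Sum>j. ennreal (E i j) * indicator A (t i, t j))
        + (\<Sum>i. ennreal (\<sigma> i) * emeasure lborel {x \<in> {0..1}. (t i, x) \<in> A}
               + ennreal (\<sigma>' i) * emeasure lborel {x \<in> {0..1}. (x, t i) \<in> A})
        + ennreal \<theta> * emeasure (lborel \<Otimes>\<^sub>M lborel) (A \<inter> ({0..1} \<times> {0..1}))
        + ennreal \<phi> * emeasure lborel {x \<in> {0..1}. (x, x) \<in> A})"

definition iid_uniform :: "(nat \<Rightarrow> real) measure" where
  "iid_uniform = PiM UNIV (\<lambda>_. uniform_measure lborel {0..1::real})"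

definition grapheur_law ::
  "(nat \<Rightarrow> nat \<Rightarrow> real) \<Rightarrow> (nat \<Rightarrow> real) \<Rightarrow> (nat \<Rightarrow> real) \<Rightarrow> real \<Rightarrow> real
     \<Rightarrow> (real \<times> real) measure measure" where
  "grapheur_law E \<sigma> \<sigma>' \<theta> \<phi> =
     distr iid_uniform (subprob_algebra sq_space) (grapheur_at E \<sigma> \<sigma>' \<theta> \<phi>)"

text \<open>The set \<M> of grapheurs (identified with their laws).\<close>
definition grapheurs :: "(real \<times> real) measure measure set" where
  "grapheurs = {grapheur_law E \<sigma> \<sigma>' \<theta> \<phi> | E \<sigma> \<sigma>' \<theta> \<phi>. grapheur_params E \<sigma> \<sigma>' \<theta> \<phi>}"

definition couplings :: "'a measure \<Rightarrow> 'b measure \<Rightarrow> ('a \<times> 'b) measure set" where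
  "couplings P Q = {C. prob_space C \<and> sets C = sets (P \<Otimes>\<^sub>M Q) \<and>
                       distr C P fst = P \<and> distr C Q snd = Q}"

definition W_box :: "(real \<times> real) measure measure \<Rightarrow> (real \<times> real) measure measure \<Rightarrow> ennreal" where
  "W_box P Q = (\<Sqinter>C \<in> couplings P Q.
      \<Squnion>(S,T) \<in> {(S,T). is_interval S \<and> S \<subseteq> {0..1} \<and> is_interval T \<and> T \<subseteq> {0..1::real}}.
        \<integral>\<^sup>+ mm. ennreal \<bar>measure (fst mm) (S \<times> T) - measure (snd mm) (S \<times> T)\<bar> \<partial>C)"

text \<open>k x k real matrices, indexed by {0..<k} x {0..<k} (entry (i,j) corresponds to I_(i+1), I_(j+1)).\<close>
definition mat_space :: "nat \<Rightarrow> (nat \<times> nat \<Rightarrow> real) measure" where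
  "mat_space k = PiM ({..<k} \<times> {..<k}) (\<lambda>_. borel)"

text \<open>I_(i+1)^(k) = [i/k, (i+1)/k).\<close>
definition I_int :: "nat \<Rightarrow> nat \<Rightarrow> real set" where
  "I_int k i = {real i / real k ..< real (Suc i) / real k}"

definition G_law :: "nat \<Rightarrow> (real \<times> real) measure measure \<Rightarrow> (nat \<times> nat \<Rightarrow> real) measure" where
  "G_law k P = distr P (mat_space k)
     (\<lambda>m. \<lambda>ij \<in> {..<k} \<times> {..<k}. measure m (I_int k (fst ij) \<times> I_int k (snd ij)))"

definition W_1 :: "nat \<Rightarrow> (nat \<times> nat \<Rightarrow> real) measure \<Rightarrow> (nat \<times> nat \<Rightarrow> real) measure \<Rightarrow> ennreal" where
  "W_1 k P Q = (\<Sqinter>C \<in> couplings P Q.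
      \<integral>\<^sup>+ XY. ennreal (\<Sum>ij \<in> {..<k} \<times> {..<k}. \<bar>fst XY ij - snd XY ij\<bar>) \<partial>C)"

end

theory Submission
  imports Defs
begin

(*
  The first inequality: push a coupling of M and N forward along the grid-matrix map. Every entry
  of G_k is the mass of a rectangle I_i x I_j, so the l1 transport cost of the image coupling is
  at most k^2 times the box cost of the original one.

  The second inequality: rounding the endpoints of intervals S, T to the grid 1/k Z, the rectangle
  S x T differs from a union of grid cells by two strips B x [0,1] and [0,1] x B' with
  lambda(B), lambda(B') <= 1/k. For a grapheur the expected mass of such a strip is at most lambda(B),
  because the points T_i are uniform; this is the error 4/k. It remains to turn a coupling of
  G_k[M] and G_k[N] into a coupling of M and N of almost the same cost: quantize the grid matrices
  to L levels, glue M and N conditionally independently given the quantized matrices, and let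
  L tend to infinity.
*)

section \<open>Couplings\<close>

lemma le_mult_INF_ennreal:
  fixes c W :: ennreal
  assumes c: "c \<noteq> 0" "c \<noteq> top" and le: "\<And>x. x \<in> A \<Longrightarrow> W \<le> c * f x"
  shows "W \<le> c * (INF x\<in>A. f x)"
proof -
  have "W / c \<le> f x" if "x \<in> A" for x
  proof -
    have "W / c \<le> (f x * c) / c" using le[OF that] by (intro divide_right_mono_ennreal) (simp add: mult.commute)
    also have "\<dots> = f x" using c by (simp add: ennreal_mult_divide_eq)
    finally show ?thesis .
  qed
  then have "W / c * c \<le> (INF x\<in>A. f x) * c" by (intro mult_right_mono INF_greatest) auto
  moreover have "W / c * c = W"
  proof -
    have "c / c = 1" using c by (simp add: divide_eq_1_ennreal)
    then show ?thesis by (simp add: ennreal_divide_times)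
  qed
  ultimately show ?thesis by (simp add: mult.commute)
qed

lemma INF_add_const_ennreal:
  fixes g :: "'a \<Rightarrow> ennreal"
  shows "(INF x\<in>A. g x + c) = (INF x\<in>A. g x) + c"
proof (cases "A = {}")
  case False
  then show ?thesis
    using continuous_at_Inf_mono[of "\<lambda>x. x + c" "g ` A"]
      continuous_add[of "at_right (Inf (g ` A))" "\<lambda>x. x" "\<lambda>x. c"]
    by (auto simp: mono_def image_comp add_right_mono)
qed simp

lemma couplingsD:
  assumes "C \<in> couplings M N"
  shows "prob_space C" "sets C = sets (M \<Otimes>\<^sub>M N)" "distr C M fst = M" "distr C N snd = N"
    "fst \<in> C \<rightarrow>\<^sub>M M" "snd \<in> C \<rightarrow>\<^sub>M N"
proof -
  show "prob_space C" "sets C = sets (M \<Otimes>\<^sub>M N)" "distr C M fst = M" "distr C N snd = N"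
    using assms by (auto simp: couplings_def)
  then show "fst \<in> C \<rightarrow>\<^sub>M M" "snd \<in> C \<rightarrow>\<^sub>M N"
    by (simp_all add: measurable_cong_sets[of C "M \<Otimes>\<^sub>M N"])
qed

lemma nn_integral_couplings_fst:
  assumes C: "C \<in> couplings M N" and h: "h \<in> borel_measurable M"
  shows "(\<integral>\<^sup>+p. h (fst p) \<partial>C) = (\<integral>\<^sup>+x. h x \<partial>M)"
  using nn_integral_distr[OF couplingsD(5)[OF C], of h] h by (simp add: couplingsD(3)[OF C])

lemma nn_integral_couplings_snd:
  assumes C: "C \<in> couplings M N" and h: "h \<in> borel_measurable N"
  shows "(\<integral>\<^sup>+p. h (snd p) \<partial>C) = (\<integral>\<^sup>+y. h y \<partial>N)"
  using nn_integral_distr[OF couplingsD(6)[OF C], of h] h by (simp add: couplingsD(4)[OF C])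

lemma measurable_map_prod:
  assumes "f \<in> M \<rightarrow>\<^sub>M M'" "g \<in> N \<rightarrow>\<^sub>M N'"
  shows "map_prod f g \<in> M \<Otimes>\<^sub>M N \<rightarrow>\<^sub>M M' \<Otimes>\<^sub>M N'"
  unfolding map_prod_def split_beta'
  by (intro measurable_Pair measurable_compose[OF measurable_fst assms(1)] measurable_compose[OF measurable_snd assms(2)])

lemma nn_integral_add_const_prob_space:
  "prob_space M \<Longrightarrow> f \<in> borel_measurable M \<Longrightarrow> (\<integral>\<^sup>+x. f x + c \<partial>M) = (\<integral>\<^sup>+x. f x \<partial>M) + c"
  by (simp add: nn_integral_add prob_space.emeasure_space_1)

lemma measurable_map_prod_couplings:
  assumes C: "C \<in> couplings M N" and f: "f \<in> M \<rightarrow>\<^sub>M M'" and g: "g \<in> N \<rightarrow>\<^sub>M N'"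
  shows "map_prod f g \<in> C \<rightarrow>\<^sub>M M' \<Otimes>\<^sub>M N'"
  using measurable_map_prod[OF f g] by (simp add: measurable_cong_sets[OF couplingsD(2)[OF C] refl])

lemma distr_map_prod_in_couplings:
  assumes C: "C \<in> couplings M N" and f: "f \<in> M \<rightarrow>\<^sub>M M'" and g: "g \<in> N \<rightarrow>\<^sub>M N'"
  shows "distr C (M' \<Otimes>\<^sub>M N') (map_prod f g) \<in> couplings (distr M M' f) (distr N N' g)"
proof -
  note CD = couplingsD[OF C]
  note fg = measurable_map_prod_couplings[OF C f g]
  have "distr (distr C (M' \<Otimes>\<^sub>M N') (map_prod f g)) (distr M M' f) fst = distr C M' (f \<circ> fst)"
    by (subst distr_distr) (auto intro!: distr_cong simp: fg comp_def)
  also have "\<dots> = distr M M' f"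
    using distr_distr[OF f CD(5)] by (simp add: CD(3))
  finally have fst: "distr (distr C (M' \<Otimes>\<^sub>M N') (map_prod f g)) (distr M M' f) fst = distr M M' f" .
  have "distr (distr C (M' \<Otimes>\<^sub>M N') (map_prod f g)) (distr N N' g) snd = distr C N' (g \<circ> snd)"
    by (subst distr_distr) (auto intro!: distr_cong simp: fg comp_def)
  also have "\<dots> = distr N N' g"
    using distr_distr[OF g CD(6)] by (simp add: CD(4))
  finally have snd: "distr (distr C (M' \<Otimes>\<^sub>M N') (map_prod f g)) (distr N N' g) snd = distr N N' g" .
  show ?thesis
    unfolding couplings_def
    using prob_space.prob_space_distr[OF CD(1) fg] fst snd by simp
qed

lemma Int_vimage_singleton_in_sets:
  assumes f: "f \<in> M \<rightarrow>\<^sub>M count_space A" and X: "X \<in> sets M" and a: "a \<in> A"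
  shows "X \<inter> f -` {a} \<in> sets M"
proof -
  have "X \<inter> (f -` {a} \<inter> space M) \<in> sets M" using X a by (intro sets.Int measurable_sets[OF f]) auto
  moreover have "X \<inter> (f -` {a} \<inter> space M) = X \<inter> f -` {a}" using sets.sets_into_space[OF X] by auto
  ultimately show ?thesis by simp
qed

lemma measure_eq_sum_fibers:
  assumes "finite_measure M" "finite A" and f: "f \<in> M \<rightarrow>\<^sub>M count_space A" and X: "X \<in> sets M"
  shows "measure M X = (\<Sum>a\<in>A. measure M (X \<inter> f -` {a}))"
proof -
  note fib = Int_vimage_singleton_in_sets[OF f X]
  have "X = (\<Union>a\<in>A. X \<inter> f -` {a})"
    using measurable_space[OF f] sets.sets_into_space[OF X] by auto
  then have "measure M X = measure M (\<Union>a\<in>A. X \<inter> f -` {a})" by simp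
  also have "\<dots> = (\<Sum>a\<in>A. measure M (X \<inter> f -` {a}))"
    using assms fib by (intro finite_measure.finite_measure_finite_Union) (auto simp: disjoint_family_on_def)
  finally show ?thesis .
qed

lemma sum_indicator_fibers:
  fixes h :: "'c \<Rightarrow> 'd \<Rightarrow> ennreal"
  assumes "finite A" "finite B" "f x \<in> A" "g y \<in> B"
  shows "(\<Sum>a\<in>A. \<Sum>b\<in>B. h a b * indicator ((X \<inter> f -` {a}) \<times> (Y \<inter> g -` {b})) (x, y))
    = h (f x) (g y) * indicator (X \<times> Y) (x, y)"
proof -
  have "(\<Sum>b\<in>B. h a b * indicator ((X \<inter> f -` {a}) \<times> (Y \<inter> g -` {b})) (x, y))
      = (if a = f x then h a (g y) * indicator (X \<times> Y) (x, y) else 0)" for a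
  proof -
    have "(\<Sum>b\<in>B. h a b * indicator ((X \<inter> f -` {a}) \<times> (Y \<inter> g -` {b})) (x, y))
      = (\<Sum>b\<in>B. if b = g y then (if a = f x then h a b * indicator (X \<times> Y) (x, y) else 0) else 0)"
      by (rule sum.cong) (auto simp: indicator_def)
    then show ?thesis using assms by simp
  qed
  then show ?thesis using assms by simp
qed

text \<open>Gluing: given a coupling \<open>C\<close> of the laws of finite-valued observables \<open>f\<close> on \<open>M\<close> and \<open>g\<close>
  on \<open>N\<close>, draw the pair of values from \<open>C\<close> and then, independently, \<open>x\<close> and \<open>y\<close> from their
  conditional laws given these values.\<close>

locale finite_gluing =
  fixes M :: "'a measure" and N :: "'b measure" and A :: "'c set" and B :: "'d set"
    and f :: "'a \<Rightarrow> 'c" and g :: "'b \<Rightarrow> 'd" and C :: "('c \<times> 'd) measure"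
  assumes M: "prob_space M" and N: "prob_space N" and A: "finite A" and B: "finite B"
    and f: "f \<in> M \<rightarrow>\<^sub>M count_space A" and g: "g \<in> N \<rightarrow>\<^sub>M count_space B"
    and C: "C \<in> couplings (distr M (count_space A) f) (distr N (count_space B) g)"
begin

definition \<alpha> :: "'c \<Rightarrow> real" where "\<alpha> a = measure M (f -` {a} \<inter> space M)"
definition \<beta> :: "'d \<Rightarrow> real" where "\<beta> b = measure N (g -` {b} \<inter> space N)"
definition \<gamma> :: "'c \<Rightarrow> 'd \<Rightarrow> real" where "\<gamma> a b = measure C {(a, b)}"

text \<open>Where \<open>\<alpha> a \<beta> b = 0\<close>, also \<open>\<gamma> a b = 0\<close> (\<open>glue_weight_mult\<close>): the junk value of \<open>x / 0\<close>
  is harmless.\<close>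

definition glue_weight :: "'c \<Rightarrow> 'd \<Rightarrow> real" where "glue_weight a b = \<gamma> a b / (\<alpha> a * \<beta> b)"
definition glued :: "('a \<times> 'b) measure" where
  "glued = density (M \<Otimes>\<^sub>M N) (\<lambda>p. ennreal (glue_weight (f (fst p)) (g (snd p))))"

lemma pair_count_space: "count_space A \<Otimes>\<^sub>M count_space B = count_space (A \<times> B)"
  using A B by (intro pair_measure_countable countable_finite)

lemma sets_C: "sets C = Pow (A \<times> B)"
proof -
  have "sets C = sets (count_space A \<Otimes>\<^sub>M count_space B)"
    unfolding couplingsD(2)[OF C] by (rule sets_pair_measure_cong) simp_all
  then show ?thesis by (simp only: pair_count_space sets_count_space)
qed

lemma measurable_map_prod_fg: "map_prod f g \<in> M \<Otimes>\<^sub>M N \<rightarrow>\<^sub>M count_space (A \<times> B)"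
proof -
  from measurable_map_prod[OF f g] show ?thesis by (simp only: pair_count_space)
qed

lemma space_C: "space C = A \<times> B"
  using sets_eq_imp_space_eq[of C "count_space (A \<times> B)"] sets_C by simp

lemma finite_measure_C: "finite_measure C"
  using couplingsD(1)[OF C] by (simp add: prob_space_def)

lemma sum_\<gamma>_row: "a \<in> A \<Longrightarrow> (\<Sum>b\<in>B. \<gamma> a b) = \<alpha> a"
proof -
  assume a: "a \<in> A"
  have "(\<Sum>b\<in>B. \<gamma> a b) = measure C (\<Union>b\<in>B. {(a, b)})"
    unfolding \<gamma>_def using finite_measure_C B a
    by (intro finite_measure.finite_measure_finite_Union[symmetric]) (auto simp: sets_C disjoint_family_on_def)
  also have "(\<Union>b\<in>B. {(a, b)}) = fst -` {a} \<inter> space C"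
    using a by (auto simp: space_C)
  also have "measure C \<dots> = measure (distr C (distr M (count_space A) f) fst) {a}"
    using a by (simp add: measure_distr[OF couplingsD(5)[OF C]])
  also have "\<dots> = \<alpha> a"
    using a by (simp add: couplingsD(3)[OF C] measure_distr[OF f] \<alpha>_def)
  finally show ?thesis .
qed

lemma sum_\<gamma>_col: "b \<in> B \<Longrightarrow> (\<Sum>a\<in>A. \<gamma> a b) = \<beta> b"
proof -
  assume b: "b \<in> B"
  have "(\<Sum>a\<in>A. \<gamma> a b) = measure C (\<Union>a\<in>A. {(a, b)})"
    unfolding \<gamma>_def using finite_measure_C A b
    by (intro finite_measure.finite_measure_finite_Union[symmetric]) (auto simp: sets_C disjoint_family_on_def)
  also have "(\<Union>a\<in>A. {(a, b)}) = snd -` {b} \<inter> space C"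
    using b by (auto simp: space_C)
  also have "measure C \<dots> = measure (distr C (distr N (count_space B) g) snd) {b}"
    using b by (simp add: measure_distr[OF couplingsD(6)[OF C]])
  also have "\<dots> = \<beta> b"
    using b by (simp add: couplingsD(4)[OF C] measure_distr[OF g] \<beta>_def)
  finally show ?thesis .
qed

lemma glue_weight_nonneg: "0 \<le> glue_weight a b"
  by (simp add: glue_weight_def \<gamma>_def \<alpha>_def \<beta>_def)

lemma glue_weight_mult:
  assumes a: "a \<in> A" and b: "b \<in> B"
  shows "glue_weight a b * \<alpha> a * \<beta> b = \<gamma> a b"
proof (cases "\<alpha> a = 0 \<or> \<beta> b = 0")
  case True
  have "\<gamma> a b \<le> (\<Sum>b'\<in>B. \<gamma> a b')" "\<gamma> a b \<le> (\<Sum>a'\<in>A. \<gamma> a' b)"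
    using a b A B unfolding \<gamma>_def by (intro member_le_sum measure_nonneg; simp)+
  moreover have "0 \<le> \<gamma> a b" by (simp add: \<gamma>_def)
  ultimately have "\<gamma> a b = 0"
    using True sum_\<gamma>_row[OF a] sum_\<gamma>_col[OF b] by linarith
  then show ?thesis by (simp add: glue_weight_def)
next
  case False
  then show ?thesis unfolding glue_weight_def by (simp add: field_simps)
qed

lemma sum_glue_weight_row:
  assumes a: "a \<in> A" and "\<alpha> a \<noteq> 0"
  shows "(\<Sum>b\<in>B. glue_weight a b * \<beta> b) = 1"
proof -
  have "\<alpha> a * (\<Sum>b\<in>B. glue_weight a b * \<beta> b) = (\<Sum>b\<in>B. glue_weight a b * \<alpha> a * \<beta> b)"
    by (simp add: sum_distrib_left ac_simps)
  also have "\<dots> = \<alpha> a" using glue_weight_mult[OF a] sum_\<gamma>_row[OF a] by simp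
  finally show ?thesis using assms(2) by simp
qed

lemma sum_glue_weight_col:
  assumes b: "b \<in> B" and "\<beta> b \<noteq> 0"
  shows "(\<Sum>a\<in>A. glue_weight a b * \<alpha> a) = 1"
proof -
  have "\<beta> b * (\<Sum>a\<in>A. glue_weight a b * \<alpha> a) = (\<Sum>a\<in>A. glue_weight a b * \<alpha> a * \<beta> b)"
    by (simp add: sum_distrib_left ac_simps)
  also have "\<dots> = \<beta> b" using glue_weight_mult[OF _ b] sum_\<gamma>_col[OF b] by simp
  finally show ?thesis using assms(2) by simp
qed

sublocale MN: pair_prob_space M N
  using M N by (simp add: pair_prob_space_def pair_sigma_finite_def prob_space_imp_sigma_finite)

lemma sets_glued: "sets glued = sets (M \<Otimes>\<^sub>M N)"
  by (simp add: glued_def)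

lemma space_glued: "space glued = space M \<times> space N"
  by (simp add: glued_def space_pair_measure)

lemma emeasure_glued_Times:
  assumes X: "X \<in> sets M" and Y: "Y \<in> sets N"
  shows "emeasure glued (X \<times> Y) = ennreal (\<Sum>a\<in>A. \<Sum>b\<in>B.
    glue_weight a b * measure M (X \<inter> f -` {a}) * measure N (Y \<inter> g -` {b}))"
proof -
  let ?R = "\<lambda>a b. (X \<inter> f -` {a}) \<times> (Y \<inter> g -` {b})"
  have R: "?R a b \<in> sets (M \<Otimes>\<^sub>M N)" if "a \<in> A" "b \<in> B" for a b
    using Int_vimage_singleton_in_sets[OF f X] Int_vimage_singleton_in_sets[OF g Y] that by auto
  have w: "(\<lambda>p. ennreal (glue_weight (f (fst p)) (g (snd p)))) \<in> borel_measurable (M \<Otimes>\<^sub>M N)"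
    using measurable_compose[OF measurable_map_prod_fg,
        of "\<lambda>(a, b). ennreal (glue_weight a b)", OF borel_measurable_count_space]
    by (simp add: map_prod_def split_beta')
  have "emeasure glued (X \<times> Y)
      = (\<integral>\<^sup>+p. ennreal (glue_weight (f (fst p)) (g (snd p))) * indicator (X \<times> Y) p \<partial>(M \<Otimes>\<^sub>M N))"
    unfolding glued_def using X Y by (intro emeasure_density w) auto
  also have "\<dots> = (\<integral>\<^sup>+p. (\<Sum>a\<in>A. \<Sum>b\<in>B. ennreal (glue_weight a b) * indicator (?R a b) p) \<partial>(M \<Otimes>\<^sub>M N))"
  proof (rule nn_integral_cong)
    fix p assume "p \<in> space (M \<Otimes>\<^sub>M N)"
    moreover obtain x y where p: "p = (x, y)" by fastforce
    ultimately have "f x \<in> A" "g y \<in> B"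
      using measurable_space[OF f] measurable_space[OF g] by (auto simp: space_pair_measure)
    then show "ennreal (glue_weight (f (fst p)) (g (snd p))) * indicator (X \<times> Y) p
        = (\<Sum>a\<in>A. \<Sum>b\<in>B. ennreal (glue_weight a b) * indicator (?R a b) p)"
      unfolding p fst_conv snd_conv by (intro sum_indicator_fibers[symmetric] A B)
  qed
  also have "\<dots> = (\<Sum>a\<in>A. \<Sum>b\<in>B. ennreal (glue_weight a b) * emeasure (M \<Otimes>\<^sub>M N) (?R a b))"
    using R by (simp add: nn_integral_sum nn_integral_cmult_indicator)
  also have "\<dots> = (\<Sum>a\<in>A. \<Sum>b\<in>B. ennreal (glue_weight a b * measure M (X \<inter> f -` {a}) * measure N (Y \<inter> g -` {b})))"
  proof (intro sum.cong refl)
    fix a b assume "a \<in> A" "b \<in> B"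
    then have "emeasure (M \<Otimes>\<^sub>M N) (?R a b) = emeasure M (X \<inter> f -` {a}) * emeasure N (Y \<inter> g -` {b})"
      using Int_vimage_singleton_in_sets[OF f X] Int_vimage_singleton_in_sets[OF g Y]
      by (intro MN.M2.emeasure_pair_measure_Times) auto
    then show "ennreal (glue_weight a b) * emeasure (M \<Otimes>\<^sub>M N) (?R a b)
        = ennreal (glue_weight a b * measure M (X \<inter> f -` {a}) * measure N (Y \<inter> g -` {b}))"
      using glue_weight_nonneg
      by (simp add: MN.M1.emeasure_eq_measure MN.M2.emeasure_eq_measure ennreal_mult mult.assoc)
  qed
  also have "\<dots> = ennreal (\<Sum>a\<in>A. \<Sum>b\<in>B. glue_weight a b * measure M (X \<inter> f -` {a}) * measure N (Y \<inter> g -` {b}))"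
    using glue_weight_nonneg by (simp add: sum_nonneg)
  finally show ?thesis .
qed

lemma measure_Int_vimage_le_\<alpha>:
  assumes "X \<in> sets M" "a \<in> A"
  shows "measure M (X \<inter> f -` {a}) \<le> \<alpha> a"
  unfolding \<alpha>_def using assms sets.sets_into_space[OF assms(1)]
  by (intro MN.M1.finite_measure_mono measurable_sets[OF f]) auto

lemma measure_Int_vimage_le_\<beta>:
  assumes "Y \<in> sets N" "b \<in> B"
  shows "measure N (Y \<inter> g -` {b}) \<le> \<beta> b"
  unfolding \<beta>_def using assms sets.sets_into_space[OF assms(1)]
  by (intro MN.M2.finite_measure_mono measurable_sets[OF g]) auto

lemma emeasure_glued_fst:
  assumes X: "X \<in> sets M"
  shows "emeasure glued (X \<times> space N) = emeasure M X"
proof -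
  have "(\<Sum>b\<in>B. glue_weight a b * measure M (X \<inter> f -` {a}) * measure N (space N \<inter> g -` {b}))
      = measure M (X \<inter> f -` {a})" if a: "a \<in> A" for a
  proof (cases "\<alpha> a = 0")
    case True
    then have "measure M (X \<inter> f -` {a}) = 0"
      using measure_Int_vimage_le_\<alpha>[OF X a] measure_nonneg[of M] by (simp add: antisym)
    then show ?thesis by simp
  next
    case False
    have "(\<Sum>b\<in>B. glue_weight a b * measure M (X \<inter> f -` {a}) * measure N (space N \<inter> g -` {b}))
        = measure M (X \<inter> f -` {a}) * (\<Sum>b\<in>B. glue_weight a b * \<beta> b)"
      by (simp add: sum_distrib_left \<beta>_def Int_commute ac_simps)
    then show ?thesis using sum_glue_weight_row[OF a False] by simp
  qed
  then show ?thesis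
    using emeasure_glued_Times[OF X sets.top] measure_eq_sum_fibers[OF _ A f X]
    by (simp add: MN.M1.emeasure_eq_measure)
qed

lemma emeasure_glued_snd:
  assumes Y: "Y \<in> sets N"
  shows "emeasure glued (space M \<times> Y) = emeasure N Y"
proof -
  have "(\<Sum>a\<in>A. glue_weight a b * measure M (space M \<inter> f -` {a}) * measure N (Y \<inter> g -` {b}))
      = measure N (Y \<inter> g -` {b})" if b: "b \<in> B" for b
  proof (cases "\<beta> b = 0")
    case True
    then have "measure N (Y \<inter> g -` {b}) = 0"
      using measure_Int_vimage_le_\<beta>[OF Y b] measure_nonneg[of N] by (simp add: antisym)
    then show ?thesis by simp
  next
    case False
    have "(\<Sum>a\<in>A. glue_weight a b * measure M (space M \<inter> f -` {a}) * measure N (Y \<inter> g -` {b}))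
        = measure N (Y \<inter> g -` {b}) * (\<Sum>a\<in>A. glue_weight a b * \<alpha> a)"
      by (simp add: sum_distrib_left \<alpha>_def Int_commute ac_simps)
    then show ?thesis using sum_glue_weight_col[OF b False] by simp
  qed
  moreover have "(\<Sum>a\<in>A. \<Sum>b\<in>B. glue_weight a b * measure M (space M \<inter> f -` {a}) * measure N (Y \<inter> g -` {b}))
      = (\<Sum>b\<in>B. \<Sum>a\<in>A. glue_weight a b * measure M (space M \<inter> f -` {a}) * measure N (Y \<inter> g -` {b}))"
    by (rule sum.swap)
  ultimately show ?thesis
    using emeasure_glued_Times[OF sets.top Y] measure_eq_sum_fibers[OF _ B g Y]
    by (simp add: MN.M2.emeasure_eq_measure)
qed

lemma glued_in_couplings: "glued \<in> couplings M N"
proof -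
  have fst: "fst \<in> glued \<rightarrow>\<^sub>M M" and snd: "snd \<in> glued \<rightarrow>\<^sub>M N"
    by (simp_all add: measurable_cong_sets[OF sets_glued refl])
  have "distr glued M fst = M"
  proof (rule measure_eqI)
    fix X assume "X \<in> sets (distr glued M fst)"
    then have X: "X \<in> sets M" by simp
    moreover have "fst -` X \<inter> space glued = X \<times> space N"
      using sets.sets_into_space[OF X] by (auto simp: space_glued)
    ultimately show "emeasure (distr glued M fst) X = emeasure M X"
      by (simp add: emeasure_distr[OF fst] emeasure_glued_fst)
  qed simp
  moreover have "distr glued N snd = N"
  proof (rule measure_eqI)
    fix Y assume "Y \<in> sets (distr glued N snd)"
    then have Y: "Y \<in> sets N" by simp
    moreover have "snd -` Y \<inter> space glued = space M \<times> Y"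
      using sets.sets_into_space[OF Y] by (auto simp: space_glued)
    ultimately show "emeasure (distr glued N snd) Y = emeasure N Y"
      by (simp add: emeasure_distr[OF snd] emeasure_glued_snd)
  qed simp
  moreover have "prob_space glued"
    by (rule prob_spaceI) (simp add: space_glued emeasure_glued_fst MN.M1.emeasure_space_1)
  ultimately show ?thesis unfolding couplings_def by (simp add: sets_glued)
qed

lemma distr_glued: "distr glued (count_space A \<Otimes>\<^sub>M count_space B) (map_prod f g) = C"
proof (rule measure_eqI_finite)
  show "sets (distr glued (count_space A \<Otimes>\<^sub>M count_space B) (map_prod f g)) = Pow (A \<times> B)"
    by (simp only: sets_distr pair_count_space sets_count_space)
  show "sets C = Pow (A \<times> B)" by (rule sets_C)
  show "finite (A \<times> B)" using A B by simp
  fix ab assume "ab \<in> A \<times> B"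
  then obtain a b where ab: "ab = (a, b)" and a: "a \<in> A" and b: "b \<in> B" by blast
  have fg: "map_prod f g \<in> glued \<rightarrow>\<^sub>M count_space A \<Otimes>\<^sub>M count_space B"
    using measurable_map_prod_fg by (simp add: measurable_cong_sets[OF sets_glued refl] pair_count_space)
  have "map_prod f g -` {(a, b)} \<inter> space glued = (space M \<inter> f -` {a}) \<times> (space N \<inter> g -` {b})"
    by (auto simp: space_glued)
  moreover have "measure M ((space M \<inter> f -` {a}) \<inter> f -` {a'}) = (if a' = a then \<alpha> a else 0)" for a'
  proof -
    have "(space M \<inter> f -` {a}) \<inter> f -` {a'} = (if a' = a then f -` {a} \<inter> space M else {})" by auto
    then show ?thesis by (simp add: \<alpha>_def)
  qed
  moreover have "measure N ((space N \<inter> g -` {b}) \<inter> g -` {b'}) = (if b' = b then \<beta> b else 0)" for b'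
  proof -
    have "(space N \<inter> g -` {b}) \<inter> g -` {b'} = (if b' = b then g -` {b} \<inter> space N else {})" by auto
    then show ?thesis by (simp add: \<beta>_def)
  qed
  moreover have "space M \<inter> f -` {a} \<in> sets M" "space N \<inter> g -` {b} \<in> sets N"
    using Int_vimage_singleton_in_sets[OF f sets.top a] Int_vimage_singleton_in_sets[OF g sets.top b] .
  ultimately have cell: "emeasure glued (map_prod f g -` {(a, b)} \<inter> space glued) = ennreal (\<gamma> a b)"
    using a b A B by (simp add: emeasure_glued_Times glue_weight_mult if_distrib[of "\<lambda>x. _ * x"]
        if_distrib[of "\<lambda>x. x * \<beta> b"] cong: if_cong)
  show "emeasure (distr glued (count_space A \<Otimes>\<^sub>M count_space B) (map_prod f g)) {ab} = emeasure C {ab}"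
  proof -
    have "{(a, b)} \<in> sets (count_space A \<Otimes>\<^sub>M count_space B)"
      unfolding pair_count_space using a b by simp
    then show ?thesis using finite_measure_C cell
      by (simp add: ab emeasure_distr[OF fg] finite_measure.emeasure_eq_measure \<gamma>_def)
  qed
qed

end

lemma couplings_lift_finite:
  assumes "prob_space M" "prob_space N" "finite A" "finite B"
    and "f \<in> M \<rightarrow>\<^sub>M count_space A" "g \<in> N \<rightarrow>\<^sub>M count_space B"
    and "C \<in> couplings (distr M (count_space A) f) (distr N (count_space B) g)"
  obtains D where "D \<in> couplings M N" "distr D (count_space A \<Otimes>\<^sub>M count_space B) (map_prod f g) = C"
proof -
  interpret finite_gluing M N A B f g C using assms by (rule finite_gluing.intro)
  show ?thesis using that glued_in_couplings distr_glued by blast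
qed

section \<open>Grid approximation of rectangles\<close>

lemma space_sq_space: "space sq_space = {0..1} \<times> {0..1}"
  by (simp add: sq_space_def space_restrict_space)

lemma sets_sq_space_iff: "X \<in> sets sq_space \<longleftrightarrow> X \<in> sets borel \<and> X \<subseteq> {0..1} \<times> {0..1}"
proof -
  have "{0..1} \<times> {0..1} \<in> sets (borel :: (real \<times> real) measure)"
    by (intro borel_closed closed_Times) auto
  then show ?thesis unfolding sq_space_def by (subst sets_restrict_space_iff) auto
qed

lemma Times_in_sets_sq_space:
  assumes "X \<in> sets borel" "Y \<in> sets borel" "X \<subseteq> {0..1}" "Y \<subseteq> {0..1}"
  shows "X \<times> Y \<in> sets sq_space"
proof -
  have "X \<times> Y \<in> sets (borel \<Otimes>\<^sub>M (borel :: real measure))" using assms by (intro pair_measureI) auto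
  then have "X \<times> Y \<in> sets (borel :: (real \<times> real) measure)" by (simp only: borel_prod)
  then show ?thesis using assms by (auto simp: sets_sq_space_iff)
qed

lemma grid_interval_subset:
  assumes "q \<le> k" shows "{real p / real k ..< real q / real k} \<subseteq> {0..1}"
proof
  fix x assume "x \<in> {real p / real k ..< real q / real k}"
  moreover have "0 \<le> real p / real k" "real q / real k \<le> 1" using assms by (auto simp: divide_le_eq_1)
  ultimately show "x \<in> {0..1}" unfolding atLeastAtMost_iff atLeastLessThan_iff by linarith
qed

lemma I_int_subset: "i < k \<Longrightarrow> I_int k i \<subseteq> {0..1}"
  unfolding I_int_def by (rule grid_interval_subset) simp

lemma is_interval_I_int: "is_interval (I_int k i)"
  by (simp add: I_int_def is_interval_co)

lemma I_int_in_sets_borel: "I_int k i \<in> sets borel"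
  by (simp add: I_int_def)

lemma grid_cell_in_sets_sq_space: "i < k \<Longrightarrow> j < k \<Longrightarrow> I_int k i \<times> I_int k j \<in> sets sq_space"
  by (intro Times_in_sets_sq_space I_int_in_sets_borel I_int_subset)

lemma mem_I_int_iff:
  assumes "k \<ge> 1" shows "x \<in> I_int k i \<longleftrightarrow> \<lfloor>real k * x\<rfloor> = int i"
proof -
  have k: "0 < real k" using assms by simp
  have "x \<in> I_int k i \<longleftrightarrow> real i \<le> real k * x \<and> real k * x < real i + 1"
    using k by (auto simp: I_int_def pos_divide_le_eq pos_less_divide_eq mult.commute)
  then show ?thesis by (simp add: floor_eq_iff)
qed

lemma disjoint_I_int: "k \<ge> 1 \<Longrightarrow> i \<noteq> j \<Longrightarrow> I_int k i \<inter> I_int k j = {}"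
  by (auto simp: mem_I_int_iff)

lemma UN_I_int_eq:
  assumes "k \<ge> 1"
  shows "(\<Union>i\<in>{p..<q}. I_int k i) = {real p / real k ..< real q / real k}"
proof -
  have "x \<in> (\<Union>i\<in>{p..<q}. I_int k i) \<longleftrightarrow> int p \<le> \<lfloor>real k * x\<rfloor> \<and> \<lfloor>real k * x\<rfloor> < int q" for x
  proof -
    have "(\<exists>i\<in>{p..<q}. \<lfloor>real k * x\<rfloor> = int i) \<longleftrightarrow> int p \<le> \<lfloor>real k * x\<rfloor> \<and> \<lfloor>real k * x\<rfloor> < int q"
    proof
      assume fl: "int p \<le> \<lfloor>real k * x\<rfloor> \<and> \<lfloor>real k * x\<rfloor> < int q"
      then have "0 \<le> \<lfloor>real k * x\<rfloor>" by linarith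
      with fl show "\<exists>i\<in>{p..<q}. \<lfloor>real k * x\<rfloor> = int i"
        by (intro bexI[of _ "nat \<lfloor>real k * x\<rfloor>"]) auto
    qed auto
    then show ?thesis using assms by (simp add: mem_I_int_iff)
  qed
  also have "int p \<le> \<lfloor>real k * x\<rfloor> \<and> \<lfloor>real k * x\<rfloor> < int q \<longleftrightarrow> x \<in> {real p / real k ..< real q / real k}" for x
    using assms by (simp add: le_floor_iff floor_less_iff field_simps)
  finally show ?thesis by blast
qed

lemma interval_between_bounds:
  fixes S :: "real set"
  assumes S: "is_interval S" "S \<subseteq> {0..1}"
  obtains a b where "0 \<le> a" "a \<le> b" "b \<le> 1" "{a<..<b} \<subseteq> S" "S \<subseteq> {a..b}"
proof (cases "S = {}")
  case True
  then show ?thesis using that[of 0 0] by auto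
next
  case False
  have bdd: "bdd_below S" "bdd_above S" using S(2) by (auto intro!: bdd_belowI[of _ 0] bdd_aboveI[of _ 1])
  have "{Inf S<..<Sup S} \<subseteq> S"
  proof
    fix y assume y: "y \<in> {Inf S<..<Sup S}"
    obtain x1 where "x1 \<in> S" "x1 < y" using y False bdd(1) by (auto simp: cInf_less_iff)
    moreover obtain x2 where "x2 \<in> S" "y < x2" using y False bdd(2) by (auto simp: less_cSup_iff)
    ultimately show "y \<in> S" using S(1) unfolding is_interval_1 by (meson less_imp_le)
  qed
  moreover have "S \<subseteq> {Inf S..Sup S}" using bdd by (auto intro: cInf_lower cSup_upper)
  moreover have "0 \<le> Inf S" "Sup S \<le> 1" using False S(2) by (auto intro!: cInf_greatest cSup_least)
  ultimately show ?thesis using False by (intro that) auto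
qed

lemma nearest_grid_point:
  assumes k: "k \<ge> 1" and a: "0 \<le> a" "a \<le> 1"
  obtains p where "p \<le> k" "\<bar>a - real p / real k\<bar> \<le> 1 / (2 * real k)"
proof
  let ?r = "round (real k * a)"
  have r: "\<bar>of_int ?r - real k * a\<bar> \<le> 1/2" by (rule of_int_round_abs_le)
  have ka: "0 \<le> real k * a" "real k * a \<le> real k" using a k by (auto simp: mult_left_le)
  then have r0: "0 \<le> ?r" and "?r \<le> int k" using r by linarith+
  then show "nat ?r \<le> k" by linarith
  have k0: "0 < real k" using k by simp
  have "\<bar>a - real (nat ?r) / real k\<bar> = \<bar>real k * a - of_int ?r\<bar> / real k"
    using r0 k0 by (simp add: field_simps abs_div_pos[symmetric])
  also have "\<dots> \<le> (1/2) / real k" using r k0 by (intro divide_right_mono) (auto simp: abs_minus_commute)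
  finally show "\<bar>a - real (nat ?r) / real k\<bar> \<le> 1 / (2 * real k)" by simp
qed

text \<open>Rounding both endpoints to the nearest grid point costs at most \<open>1 / (2 k)\<close> at each end.\<close>

lemma interval_grid_approx:
  fixes S :: "real set"
  assumes k: "k \<ge> 1" and S: "is_interval S" "S \<subseteq> {0..1}"
  obtains p q e where "q \<le> k" "e \<in> sets borel" "e \<subseteq> {0..1}" "emeasure lborel e \<le> ennreal (1 / real k)"
    "S - {real p / real k ..< real q / real k} \<subseteq> e" "{real p / real k ..< real q / real k} - S \<subseteq> e"
proof -
  obtain a b where ab: "0 \<le> a" "a \<le> b" "b \<le> 1" "{a<..<b} \<subseteq> S" "S \<subseteq> {a..b}"
    using interval_between_bounds[OF S] .
  obtain p where p: "p \<le> k" "\<bar>a - real p / real k\<bar> \<le> 1 / (2 * real k)"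
    using nearest_grid_point[OF k ab(1)] ab by auto
  obtain q where q: "q \<le> k" "\<bar>b - real q / real k\<bar> \<le> 1 / (2 * real k)"
    using nearest_grid_point[OF k _ ab(3)] ab by auto
  have grid01: "0 \<le> real j / real k" "real j / real k \<le> 1" if "j \<le> k" for j
    using that k by (auto simp: divide_le_eq_1)
  define e where "e = {min a (real p / real k)..max a (real p / real k)}
    \<union> {min b (real q / real k)..max b (real q / real k)}"
  have "emeasure lborel e \<le> ennreal \<bar>a - real p / real k\<bar> + ennreal \<bar>b - real q / real k\<bar>"
  proof -
    have "emeasure lborel e \<le> emeasure lborel {min a (real p / real k)..max a (real p / real k)}
        + emeasure lborel {min b (real q / real k)..max b (real q / real k)}"
      unfolding e_def by (rule emeasure_subadditive) auto
    moreover have "emeasure lborel {min x y..max x y} = ennreal \<bar>x - y\<bar>" for x y :: real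
      by (cases "x \<le> y") (auto simp: min_def max_def)
    ultimately show ?thesis by simp
  qed
  also have "\<dots> \<le> ennreal (1 / real k)"
    using p(2) q(2) by (simp add: ennreal_plus[symmetric] field_simps del: ennreal_plus)
  finally have "emeasure lborel e \<le> ennreal (1 / real k)" .
  moreover have "e \<subseteq> {0..1}" using ab grid01[OF p(1)] grid01[OF q(1)] by (auto simp: e_def)
  moreover have "S - {real p / real k ..< real q / real k} \<subseteq> e"
  proof
    fix x assume x: "x \<in> S - {real p / real k ..< real q / real k}"
    then have "a \<le> x" "x \<le> b" "x < real p / real k \<or> real q / real k \<le> x" using ab(5) by auto
    then show "x \<in> e" unfolding e_def by auto
  qed
  moreover have "{real p / real k ..< real q / real k} - S \<subseteq> e"
  proof
    fix x assume x: "x \<in> {real p / real k ..< real q / real k} - S"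
    then have "real p / real k \<le> x" "x < real q / real k" "x \<le> a \<or> b \<le> x"
      using ab(4) by (auto simp: subset_eq not_le)
    then show "x \<in> e" unfolding e_def by auto
  qed
  moreover have "e \<in> sets borel" by (simp add: e_def)
  ultimately show ?thesis using that q(1) by blast
qed

lemma abs_measure_diff_le:
  assumes "finite_measure m" and sets: "X \<in> sets m" "Y \<in> sets m" "E \<in> sets m"
    and "X \<subseteq> Y \<union> E" "Y \<subseteq> X \<union> E"
  shows "\<bar>measure m X - measure m Y\<bar> \<le> measure m E"
proof -
  interpret finite_measure m by fact
  have "measure m X \<le> measure m Y + measure m E"
    using assms finite_measure_mono[of X "Y \<union> E"] measure_Un_le[of Y m E] by auto
  moreover have "measure m Y \<le> measure m X + measure m E"
    using assms finite_measure_mono[of Y "X \<union> E"] measure_Un_le[of X m E] by auto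
  ultimately show ?thesis by linarith
qed

definition grid_matrix :: "nat \<Rightarrow> (real \<times> real) measure \<Rightarrow> nat \<times> nat \<Rightarrow> real" where
  "grid_matrix k m = (\<lambda>ij\<in>{..<k} \<times> {..<k}. measure m (I_int k (fst ij) \<times> I_int k (snd ij)))"

lemma G_law_eq_distr_grid_matrix: "G_law k P = distr P (mat_space k) (grid_matrix k)"
  unfolding G_law_def grid_matrix_def ..

lemma finite_measure_subprob_algebra_sq_space:
  "m \<in> space (subprob_algebra sq_space) \<Longrightarrow> finite_measure m \<and> sets m = sets sq_space"
  by (auto simp: space_subprob_algebra intro: subprob_space.axioms)

lemma sum_grid_matrix_eq_measure:
  assumes k: "k \<ge> 1" and m: "m \<in> space (subprob_algebra sq_space)" and P: "P \<subseteq> {..<k}" and Q: "Q \<subseteq> {..<k}"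
  shows "(\<Sum>ij\<in>P \<times> Q. grid_matrix k m ij) = measure m ((\<Union>i\<in>P. I_int k i) \<times> (\<Union>j\<in>Q. I_int k j))"
proof -
  have "(\<Union>i\<in>P. I_int k i) \<times> (\<Union>j\<in>Q. I_int k j) = (\<Union>ij\<in>P \<times> Q. I_int k (fst ij) \<times> I_int k (snd ij))"
    by auto
  moreover have "finite (P \<times> Q)" using P Q by (auto intro: finite_subset)
  moreover have "disjoint_family_on (\<lambda>ij. I_int k (fst ij) \<times> I_int k (snd ij)) (P \<times> Q)"
    unfolding disjoint_family_on_def using disjoint_I_int[OF k] by fastforce
  moreover have "(\<Sum>ij\<in>P \<times> Q. grid_matrix k m ij) = (\<Sum>ij\<in>P \<times> Q. measure m (I_int k (fst ij) \<times> I_int k (snd ij)))"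
    using P Q by (intro sum.cong) (auto simp: grid_matrix_def)
  ultimately show ?thesis
    using finite_measure_subprob_algebra_sq_space[OF m] P Q
    by (simp add: finite_measure.finite_measure_finite_Union subset_eq grid_cell_in_sets_sq_space)
qed

lemma rectangle_grid_approx:
  assumes k: "k \<ge> 1" and S: "is_interval S" "S \<subseteq> {0..1}" and T: "is_interval T" "T \<subseteq> {0..1}"
  obtains P Q eS eT where "P \<subseteq> {..<k}" "Q \<subseteq> {..<k}"
    "eS \<in> sets borel" "eS \<subseteq> {0..1}" "emeasure lborel eS \<le> ennreal (1 / real k)"
    "eT \<in> sets borel" "eT \<subseteq> {0..1}" "emeasure lborel eT \<le> ennreal (1 / real k)"
    "\<And>m. m \<in> space (subprob_algebra sq_space) \<Longrightarrow>
       \<bar>measure m (S \<times> T) - (\<Sum>ij\<in>P \<times> Q. grid_matrix k m ij)\<bar>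
         \<le> measure m (eS \<times> {0..1}) + measure m ({0..1} \<times> eT)"
proof -
  obtain p q eS where q: "q \<le> k" and eS: "eS \<in> sets borel" "eS \<subseteq> {0..1}" "emeasure lborel eS \<le> ennreal (1 / real k)"
    and S_eS: "S - {real p / real k ..< real q / real k} \<subseteq> eS" "{real p / real k ..< real q / real k} - S \<subseteq> eS"
    using interval_grid_approx[OF k S] .
  obtain p' q' eT where q': "q' \<le> k" and eT: "eT \<in> sets borel" "eT \<subseteq> {0..1}" "emeasure lborel eT \<le> ennreal (1 / real k)"
    and T_eT: "T - {real p' / real k ..< real q' / real k} \<subseteq> eT" "{real p' / real k ..< real q' / real k} - T \<subseteq> eT"
    using interval_grid_approx[OF k T] .
  define S' where "S' = {real p / real k ..< real q / real k}"
  define T' where "T' = {real p' / real k ..< real q' / real k}"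
  have PQ: "{p..<q} \<subseteq> {..<k}" "{p'..<q'} \<subseteq> {..<k}" using q q' by auto
  have "S' \<subseteq> {0..1}" "T' \<subseteq> {0..1}"
    using q q' by (simp_all add: S'_def T'_def grid_interval_subset)
  then have S'T': "S' \<times> T' \<in> sets sq_space" by (simp add: S'_def T'_def Times_in_sets_sq_space)
  have ST: "S \<times> T \<in> sets sq_space"
    using S T by (simp add: Times_in_sets_sq_space real_interval_borel_measurable)
  have E: "eS \<times> {0..1} \<in> sets sq_space" "{0..1} \<times> eT \<in> sets sq_space"
    using eS eT by (simp_all add: Times_in_sets_sq_space)
  have incl1: "S \<times> T \<subseteq> S' \<times> T' \<union> (eS \<times> {0..1} \<union> {0..1} \<times> eT)"
    using S(2) T(2) S_eS(1) T_eT(1) unfolding S'_def T'_def by blast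
  have incl2: "S' \<times> T' \<subseteq> S \<times> T \<union> (eS \<times> {0..1} \<union> {0..1} \<times> eT)"
    using \<open>S' \<subseteq> {0..1}\<close> \<open>T' \<subseteq> {0..1}\<close> S_eS(2) T_eT(2) unfolding S'_def T'_def by blast
  have approx: "\<bar>measure m (S \<times> T) - (\<Sum>ij\<in>{p..<q} \<times> {p'..<q'}. grid_matrix k m ij)\<bar>
      \<le> measure m (eS \<times> {0..1}) + measure m ({0..1} \<times> eT)" if m: "m \<in> space (subprob_algebra sq_space)" for m
  proof -
    have fin: "finite_measure m" and sets_m: "sets m = sets sq_space"
      using finite_measure_subprob_algebra_sq_space[OF m] by auto
    have "\<bar>measure m (S \<times> T) - measure m (S' \<times> T')\<bar> \<le> measure m (eS \<times> {0..1} \<union> {0..1} \<times> eT)"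
      by (rule abs_measure_diff_le[OF fin _ _ _ incl1 incl2]) (use ST S'T' E in \<open>simp_all add: sets_m\<close>)
    also have "\<dots> \<le> measure m (eS \<times> {0..1}) + measure m ({0..1} \<times> eT)"
      using E by (intro measure_Un_le) (simp_all add: sets_m)
    finally show ?thesis
      by (simp add: sum_grid_matrix_eq_measure[OF k m PQ] UN_I_int_eq[OF k] S'_def T'_def)
  qed
  show ?thesis using that[OF PQ eS eT approx] .
qed

lemma measurable_measure_subprob_algebra:
  "A \<in> sets N \<Longrightarrow> (\<lambda>m. measure m A) \<in> borel_measurable (subprob_algebra N)"
  unfolding measure_def by (intro borel_measurable_enn2real measurable_emeasure_subprob_algebra)

lemma measurable_grid_matrix: "grid_matrix k \<in> subprob_algebra sq_space \<rightarrow>\<^sub>M mat_space k"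
  unfolding grid_matrix_def mat_space_def
proof (rule measurable_restrict)
  fix ij assume "ij \<in> {..<k} \<times> {..<k}"
  then have "I_int k (fst ij) \<times> I_int k (snd ij) \<in> sets sq_space"
    by (auto intro: grid_cell_in_sets_sq_space)
  then show "(\<lambda>m. measure m (I_int k (fst ij) \<times> I_int k (snd ij))) \<in> borel_measurable (subprob_algebra sq_space)"
    by (rule measurable_measure_subprob_algebra)
qed

lemma grid_matrix_mem_unit:
  assumes "m \<in> space (subprob_algebra sq_space)" and "ij \<in> {..<k} \<times> {..<k}"
  shows "grid_matrix k m ij \<in> {0..1}"
  using assms by (auto simp: grid_matrix_def space_subprob_algebra intro: subprob_space.subprob_measure_le_1)

section \<open>Quantized matrices\<close>

definition mat_l1 :: "nat \<Rightarrow> (nat \<times> nat \<Rightarrow> real) \<Rightarrow> (nat \<times> nat \<Rightarrow> real) \<Rightarrow> real" where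
  "mat_l1 k X Y = (\<Sum>ij\<in>{..<k} \<times> {..<k}. \<bar>X ij - Y ij\<bar>)"

lemma mat_l1_nonneg: "0 \<le> mat_l1 k X Y"
  by (simp add: mat_l1_def sum_nonneg)

lemma measurable_mat_l1: "(\<lambda>p. mat_l1 k (fst p) (snd p)) \<in> borel_measurable (mat_space k \<Otimes>\<^sub>M mat_space k)"
proof -
  have [measurable]: "(\<lambda>X. X ij) \<in> borel_measurable (mat_space k)" if "ij \<in> {..<k} \<times> {..<k}" for ij
    unfolding mat_space_def using that by (rule measurable_component_singleton)
  show ?thesis unfolding mat_l1_def by measurable
qed

definition quantize :: "nat \<Rightarrow> real \<Rightarrow> real" where
  "quantize L x = of_int \<lfloor>max 0 (min 1 x) * real L\<rfloor> / real L"

lemma quantize_mem: "quantize L x \<in> (\<lambda>i. real i / real L) ` {..L}"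
proof -
  let ?c = "max 0 (min 1 x)"
  have "0 \<le> ?c * real L" "?c * real L \<le> real L" by (simp_all add: mult_left_le_one_le)
  then have "0 \<le> \<lfloor>?c * real L\<rfloor>" "\<lfloor>?c * real L\<rfloor> \<le> int L"
    using of_int_floor_le[of "?c * real L"] by (simp, linarith)
  then show ?thesis unfolding quantize_def by (intro image_eqI[of _ _ "nat \<lfloor>?c * real L\<rfloor>"]) auto
qed

lemma abs_quantize_sub_le:
  assumes "L \<ge> 1"
  shows "\<bar>quantize L x - max 0 (min 1 x)\<bar> \<le> 1 / real L"
proof -
  let ?y = "max 0 (min 1 x) * real L"
  have L: "0 < real L" using assms by simp
  have "\<bar>quantize L x - max 0 (min 1 x)\<bar> = \<bar>of_int \<lfloor>?y\<rfloor> - ?y\<bar> / real L"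
    using L by (simp add: quantize_def field_simps abs_div_pos[symmetric])
  also have "\<dots> \<le> 1 / real L"
    using L by (intro divide_right_mono) linarith+
  finally show ?thesis .
qed

lemma abs_quantize_diff_le:
  assumes "L \<ge> 1"
  shows "\<bar>quantize L x - quantize L y\<bar> \<le> \<bar>x - y\<bar> + 2 / real L"
proof -
  have "\<bar>max 0 (min 1 x) - max 0 (min 1 y)\<bar> \<le> \<bar>x - y\<bar>" by (auto simp: max_def min_def abs_if)
  then show ?thesis using abs_quantize_sub_le[OF assms, of x] abs_quantize_sub_le[OF assms, of y]
    unfolding abs_le_iff by linarith
qed

lemma abs_diff_le_quantize:
  assumes "L \<ge> 1" "x \<in> {0..1}" "y \<in> {0..1}"
  shows "\<bar>x - y\<bar> \<le> \<bar>quantize L x - quantize L y\<bar> + 2 / real L"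
proof -
  have "max 0 (min 1 x) = x" "max 0 (min 1 y) = y" using assms(2,3) by auto
  then show ?thesis using abs_quantize_sub_le[OF assms(1), of x] abs_quantize_sub_le[OF assms(1), of y]
    unfolding abs_le_iff by linarith
qed

lemma borel_measurable_quantize[measurable]: "quantize L \<in> borel_measurable borel"
  unfolding quantize_def by measurable

definition quantize_mat :: "nat \<Rightarrow> nat \<Rightarrow> (nat \<times> nat \<Rightarrow> real) \<Rightarrow> nat \<times> nat \<Rightarrow> real" where
  "quantize_mat k L X = (\<lambda>ij\<in>{..<k} \<times> {..<k}. quantize L (X ij))"

definition quantized_mats :: "nat \<Rightarrow> nat \<Rightarrow> (nat \<times> nat \<Rightarrow> real) set" where
  "quantized_mats k L = PiE ({..<k} \<times> {..<k}) (\<lambda>_. (\<lambda>i. real i / real L) ` {..L})"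

lemma finite_quantized_mats: "finite (quantized_mats k L)"
  by (simp add: quantized_mats_def finite_PiE)

lemma quantize_mat_mem: "quantize_mat k L X \<in> quantized_mats k L"
  by (simp add: quantize_mat_def quantized_mats_def quantize_mem)

lemma measurable_quantize_mat: "quantize_mat k L \<in> mat_space k \<rightarrow>\<^sub>M count_space (quantized_mats k L)"
proof (subst measurable_count_space_eq2[OF finite_quantized_mats], intro conjI ballI)
  show "quantize_mat k L \<in> space (mat_space k) \<rightarrow> quantized_mats k L"
    using quantize_mat_mem by blast
  fix c assume c: "c \<in> quantized_mats k L"
  have [measurable]: "(\<lambda>X. X ij) \<in> borel_measurable (mat_space k)" if "ij \<in> {..<k} \<times> {..<k}" for ij
    unfolding mat_space_def using that by (rule measurable_component_singleton)
  have "quantize_mat k L -` {c} \<inter> space (mat_space k)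
      = {X \<in> space (mat_space k). \<forall>ij\<in>{..<k} \<times> {..<k}. quantize L (X ij) = c ij}"
    using c by (auto simp: quantize_mat_def quantized_mats_def PiE_iff extensional_def fun_eq_iff)
  also have "\<dots> \<in> sets (mat_space k)" by measurable
  finally show "quantize_mat k L -` {c} \<inter> space (mat_space k) \<in> sets (mat_space k)" .
qed

lemma mat_l1_quantize_mat_le:
  assumes "L \<ge> 1"
  shows "mat_l1 k (quantize_mat k L X) (quantize_mat k L Y) \<le> mat_l1 k X Y + 2 * real (k^2) / real L"
proof -
  have "mat_l1 k (quantize_mat k L X) (quantize_mat k L Y)
      \<le> (\<Sum>ij\<in>{..<k} \<times> {..<k}. \<bar>X ij - Y ij\<bar> + 2 / real L)"
    unfolding mat_l1_def quantize_mat_def by (intro sum_mono) (simp add: abs_quantize_diff_le[OF assms])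
  then show ?thesis by (simp add: mat_l1_def sum.distrib power2_eq_square algebra_simps)
qed

lemma mat_l1_le_quantize_mat:
  assumes "L \<ge> 1" and "\<And>ij. ij \<in> {..<k} \<times> {..<k} \<Longrightarrow> X ij \<in> {0..1} \<and> Y ij \<in> {0..1}"
  shows "mat_l1 k X Y \<le> mat_l1 k (quantize_mat k L X) (quantize_mat k L Y) + 2 * real (k^2) / real L"
proof -
  have "mat_l1 k X Y \<le> (\<Sum>ij\<in>{..<k} \<times> {..<k}. \<bar>quantize L (X ij) - quantize L (Y ij)\<bar> + 2 / real L)"
    unfolding mat_l1_def using assms by (intro sum_mono abs_diff_le_quantize) auto
  then show ?thesis by (simp add: mat_l1_def quantize_mat_def sum.distrib power2_eq_square algebra_simps)
qed

lemma measurable_quantize_mat_mat_space: "quantize_mat k L \<in> mat_space k \<rightarrow>\<^sub>M mat_space k"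
  unfolding quantize_mat_def mat_space_def
proof (rule measurable_restrict)
  fix ij assume "ij \<in> {..<k} \<times> {..<k}"
  from measurable_compose[OF measurable_component_singleton[OF this] borel_measurable_quantize]
  show "(\<lambda>X. quantize L (X ij)) \<in> borel_measurable (Pi\<^sub>M ({..<k} \<times> {..<k}) (\<lambda>_. borel))" .
qed

lemma nn_integral_mat_l1_quantize_mat_le:
  assumes "prob_space D" "L \<ge> 1" "(\<lambda>p. ennreal (mat_l1 k (X p) (Y p))) \<in> borel_measurable D"
  shows "(\<integral>\<^sup>+p. ennreal (mat_l1 k (quantize_mat k L (X p)) (quantize_mat k L (Y p))) \<partial>D)
    \<le> (\<integral>\<^sup>+p. ennreal (mat_l1 k (X p) (Y p)) \<partial>D) + ennreal (2 * real (k^2) / real L)"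
proof -
  have "(\<integral>\<^sup>+p. ennreal (mat_l1 k (quantize_mat k L (X p)) (quantize_mat k L (Y p))) \<partial>D)
      \<le> (\<integral>\<^sup>+p. ennreal (mat_l1 k (X p) (Y p)) + ennreal (2 * real (k^2) / real L) \<partial>D)"
    using mat_l1_quantize_mat_le[OF assms(2)] mat_l1_nonneg
    by (intro nn_integral_mono) (simp add: ennreal_plus[symmetric] del: ennreal_plus)
  then show ?thesis using nn_integral_add_const_prob_space[OF assms(1,3)] by simp
qed

lemma nn_integral_mat_l1_le_quantize_mat:
  assumes "prob_space D" "L \<ge> 1"
    and "(\<lambda>p. ennreal (mat_l1 k (quantize_mat k L (X p)) (quantize_mat k L (Y p)))) \<in> borel_measurable D"
    and "\<And>p ij. p \<in> space D \<Longrightarrow> ij \<in> {..<k} \<times> {..<k} \<Longrightarrow> X p ij \<in> {0..1} \<and> Y p ij \<in> {0..1}"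
  shows "(\<integral>\<^sup>+p. ennreal (mat_l1 k (X p) (Y p)) \<partial>D)
    \<le> (\<integral>\<^sup>+p. ennreal (mat_l1 k (quantize_mat k L (X p)) (quantize_mat k L (Y p))) \<partial>D)
      + ennreal (2 * real (k^2) / real L)"
proof -
  have "(\<integral>\<^sup>+p. ennreal (mat_l1 k (X p) (Y p)) \<partial>D)
      \<le> (\<integral>\<^sup>+p. ennreal (mat_l1 k (quantize_mat k L (X p)) (quantize_mat k L (Y p)))
          + ennreal (2 * real (k^2) / real L) \<partial>D)"
    using mat_l1_le_quantize_mat[OF assms(2)] assms(4) mat_l1_nonneg
    by (intro nn_integral_mono) (simp add: ennreal_plus[symmetric] del: ennreal_plus)
  then show ?thesis using nn_integral_add_const_prob_space[OF assms(1,3)] by simp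
qed

section \<open>Grapheurs\<close>

lemma countably_additive_emeasure_vimage:
  assumes f: "f \<in> N \<rightarrow>\<^sub>M K" and S: "S \<in> sets N" and MK: "sets M \<subseteq> sets K"
  shows "countably_additive (sets M) (\<lambda>A. emeasure N (f -` A \<inter> S))"
proof (rule countably_additiveI)
  fix F :: "nat \<Rightarrow> _" assume F: "range F \<subseteq> sets M" "disjoint_family F"
  have "f -` F i \<inter> S \<in> sets N" for i
  proof -
    have "(f -` F i \<inter> space N) \<inter> S \<in> sets N" using F(1) MK S by (intro sets.Int measurable_sets[OF f]) auto
    moreover have "(f -` F i \<inter> space N) \<inter> S = f -` F i \<inter> S" using sets.sets_into_space[OF S] by auto
    ultimately show ?thesis by simp
  qed
  then have "(\<Sum>i. emeasure N (f -` F i \<inter> S)) = emeasure N (\<Union>i. f -` F i \<inter> S)"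
    using F(2) by (intro suminf_emeasure) (auto simp: disjoint_family_on_def)
  also have "(\<Union>i. f -` F i \<inter> S) = f -` (\<Union>i. F i) \<inter> S" by auto
  finally show "(\<Sum>i. emeasure N (f -` F i \<inter> S)) = emeasure N (f -` (\<Union>i. F i) \<inter> S)" .
qed

lemma countably_additive_indicator: "countably_additive M (\<lambda>A. indicator A x :: ennreal)"
  by (rule countably_additiveI) (simp add: suminf_indicator)

lemma countably_additive_cmult:
  "countably_additive M \<mu> \<Longrightarrow> countably_additive M (\<lambda>A. (c :: ennreal) * \<mu> A)"
  unfolding countably_additive_def by simp

lemma countably_additive_add:
  "countably_additive M \<mu> \<Longrightarrow> countably_additive M \<nu> \<Longrightarrow> countably_additive M (\<lambda>A. \<mu> A + \<nu> A :: ennreal)"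
  unfolding countably_additive_def by (simp add: suminf_add[OF summableI summableI, symmetric])

lemma suminf_swap_ennreal: "(\<Sum>n. \<Sum>i. g n i :: ennreal) = (\<Sum>i. \<Sum>n. g n i)"
proof -
  have "(\<Sum>n. \<Sum>i. g n i) = (\<integral>\<^sup>+n. (\<Sum>i. g n i) \<partial>count_space UNIV)"
    by (simp add: nn_integral_count_space_nat)
  also have "\<dots> = (\<Sum>i. \<integral>\<^sup>+n. g n i \<partial>count_space UNIV)"
    by (rule nn_integral_suminf) simp
  also have "\<dots> = (\<Sum>i. \<Sum>n. g n i)"
    by (simp add: nn_integral_count_space_nat)
  finally show ?thesis .
qed

lemma countably_additive_suminf:
  assumes "\<And>i. countably_additive M (\<mu> i)"
  shows "countably_additive M (\<lambda>A. \<Sum>i. \<mu> i A :: ennreal)"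
proof (rule countably_additiveI)
  fix F :: "nat \<Rightarrow> _" assume "range F \<subseteq> M" "disjoint_family F" "\<Union>(range F) \<in> M"
  then show "(\<Sum>n. \<Sum>i. \<mu> i (F n)) = (\<Sum>i. \<mu> i (\<Union>(range F)))"
    using assms unfolding countably_additive_def by (simp add: suminf_swap_ennreal[of "\<lambda>n i. \<mu> i (F n)"])
qed

text \<open>A grapheur is the mixture, with weights \<open>E, \<sigma>, \<sigma>', \<theta>, \<phi>\<close>, of its atoms, its lines
  \<open>\<delta>\<^sub>T\<^sub>i \<otimes> \<lambda>\<close> and \<open>\<lambda> \<otimes> \<delta>\<^sub>T\<^sub>i\<close>, \<open>\<lambda>\<^sup>2\<close> and \<open>\<lambda>\<^sub>D\<close>; \<open>grapheur_mix\<close> takes the values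
  \<open>u, v, v', w, z\<close> of these components.\<close>

definition grapheur_mix ::
  "(nat \<Rightarrow> nat \<Rightarrow> real) \<Rightarrow> (nat \<Rightarrow> real) \<Rightarrow> (nat \<Rightarrow> real) \<Rightarrow> real \<Rightarrow> real
    \<Rightarrow> (nat \<Rightarrow> nat \<Rightarrow> ennreal) \<Rightarrow> (nat \<Rightarrow> ennreal) \<Rightarrow> (nat \<Rightarrow> ennreal) \<Rightarrow> ennreal \<Rightarrow> ennreal \<Rightarrow> ennreal" where
  "grapheur_mix E \<sigma> \<sigma>' \<theta> \<phi> u v v' w z = (\<Sum>i. \<Sum>j. ennreal (E i j) * u i j)
     + (\<Sum>i. ennreal (\<sigma> i) * v i + ennreal (\<sigma>' i) * v' i) + ennreal \<theta> * w + ennreal \<phi> * z"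

lemma suminf_ennreal_eq_infsum:
  assumes "\<And>i. 0 \<le> f i" "f summable_on UNIV"
  shows "(\<Sum>i. ennreal (f i)) = ennreal (\<Sum>\<^sub>\<infinity>i. f i)"
  using assms by (intro suminf_ennreal_eq has_sum_imp_sums has_sum_infsum)

lemma suminf_suminf_ennreal_eq_infsum:
  fixes E :: "nat \<Rightarrow> nat \<Rightarrow> real"
  assumes nonneg: "\<And>i j. 0 \<le> E i j" and summable: "(\<lambda>(i, j). E i j) summable_on UNIV"
  shows "(\<Sum>i. \<Sum>j. ennreal (E i j)) = ennreal (\<Sum>\<^sub>\<infinity>(i, j). E i j)"
proof -
  have S: "(\<lambda>(i, j). E i j) summable_on Sigma UNIV (\<lambda>_. UNIV)" using summable by simp
  have row: "E i summable_on UNIV" for i using summable_on_SigmaD1[OF S] by simp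
  have "((\<lambda>i. \<Sum>\<^sub>\<infinity>j. E i j) has_sum (\<Sum>\<^sub>\<infinity>(i, j). E i j)) UNIV"
    using has_sum_Sigma'[where B="\<lambda>_. UNIV" and f="\<lambda>(i, j). E i j"] S row
    by (auto intro: has_sum_infsum)
  then have "(\<Sum>i. ennreal (\<Sum>\<^sub>\<infinity>j. E i j)) = ennreal (\<Sum>\<^sub>\<infinity>(i, j). E i j)"
    by (intro suminf_ennreal_eq has_sum_imp_sums infsum_nonneg nonneg)
  then show ?thesis using suminf_ennreal_eq_infsum[OF nonneg row] by simp
qed

lemma grapheur_mix_one:
  assumes "grapheur_params E \<sigma> \<sigma>' \<theta> \<phi>"
  shows "grapheur_mix E \<sigma> \<sigma>' \<theta> \<phi> (\<lambda>_ _. 1) (\<lambda>_. 1) (\<lambda>_. 1) 1 1 = 1"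
proof -
  note P = assms[unfolded grapheur_params_def]
  define SE where "SE = (\<Sum>\<^sub>\<infinity>(i, j). E i j)"
  define S\<sigma> where "S\<sigma> = (\<Sum>\<^sub>\<infinity>i. \<sigma> i)"
  define S\<sigma>' where "S\<sigma>' = (\<Sum>\<^sub>\<infinity>i. \<sigma>' i)"
  have nonneg: "0 \<le> SE" "0 \<le> S\<sigma>" "0 \<le> S\<sigma>'" "0 \<le> \<theta>" "0 \<le> \<phi>"
    using P by (auto simp: SE_def S\<sigma>_def S\<sigma>'_def intro!: infsum_nonneg)
  have "(\<Sum>i. \<Sum>j. ennreal (E i j)) = ennreal SE"
    unfolding SE_def using P by (intro suminf_suminf_ennreal_eq_infsum) auto
  moreover have "(\<Sum>i. ennreal (\<sigma> i)) = ennreal S\<sigma>" "(\<Sum>i. ennreal (\<sigma>' i)) = ennreal S\<sigma>'"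
    unfolding S\<sigma>_def S\<sigma>'_def using P by (intro suminf_ennreal_eq_infsum; auto)+
  moreover have "(\<Sum>i. ennreal (\<sigma> i) + ennreal (\<sigma>' i)) = (\<Sum>i. ennreal (\<sigma> i)) + (\<Sum>i. ennreal (\<sigma>' i))"
    by (rule suminf_add[OF summableI summableI, symmetric])
  ultimately have "grapheur_mix E \<sigma> \<sigma>' \<theta> \<phi> (\<lambda>_ _. 1) (\<lambda>_. 1) (\<lambda>_. 1) 1 1
      = ennreal SE + (ennreal S\<sigma> + ennreal S\<sigma>') + ennreal \<theta> + ennreal \<phi>"
    by (simp only: grapheur_mix_def mult_1_right)
  also have "\<dots> = ennreal (SE + S\<sigma> + S\<sigma>' + \<theta> + \<phi>)"
    using nonneg by (simp add: ennreal_plus add.assoc)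
  also have "SE + S\<sigma> + S\<sigma>' + \<theta> + \<phi> = 1"
    using P by (simp add: SE_def S\<sigma>_def S\<sigma>'_def)
  finally show ?thesis by simp
qed

lemma grapheur_mix_mono:
  assumes "\<And>i j. u i j \<le> u' i j" "\<And>i. v i \<le> V i" "\<And>i. v' i \<le> V' i" "w \<le> w'" "z \<le> z'"
  shows "grapheur_mix E \<sigma> \<sigma>' \<theta> \<phi> u v v' w z \<le> grapheur_mix E \<sigma> \<sigma>' \<theta> \<phi> u' V V' w' z'"
  unfolding grapheur_mix_def by (intro add_mono mult_left_mono suminf_le summableI assms allI) auto

lemma grapheur_mix_le:
  assumes "grapheur_params E \<sigma> \<sigma>' \<theta> \<phi>"
    and "\<And>i j. u i j \<le> c" "\<And>i. v i \<le> c" "\<And>i. v' i \<le> c" "w \<le> c" "z \<le> c"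
  shows "grapheur_mix E \<sigma> \<sigma>' \<theta> \<phi> u v v' w z \<le> c"
proof -
  have "grapheur_mix E \<sigma> \<sigma>' \<theta> \<phi> u v v' w z \<le> grapheur_mix E \<sigma> \<sigma>' \<theta> \<phi> (\<lambda>_ _. c) (\<lambda>_. c) (\<lambda>_. c) c c"
    using assms(2-) by (rule grapheur_mix_mono)
  also have "\<dots> = grapheur_mix E \<sigma> \<sigma>' \<theta> \<phi> (\<lambda>_ _. 1) (\<lambda>_. 1) (\<lambda>_. 1) 1 1 * c"
  proof -
    have "(\<Sum>i. \<Sum>j. ennreal (E i j) * c) = (\<Sum>i. \<Sum>j. ennreal (E i j)) * c" by simp
    moreover have "(\<Sum>i. ennreal (\<sigma> i) * c + ennreal (\<sigma>' i) * c) = (\<Sum>i. ennreal (\<sigma> i) + ennreal (\<sigma>' i)) * c"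
      unfolding distrib_right[symmetric] by (rule ennreal_suminf_multc)
    ultimately show ?thesis by (simp only: grapheur_mix_def mult_1_right distrib_right)
  qed
  finally show ?thesis using grapheur_mix_one[OF assms(1)] by simp
qed

lemma nn_integral_grapheur_mix:
  assumes "prob_space Q"
    and [measurable]: "\<And>i j. u i j \<in> borel_measurable Q" "\<And>i. v i \<in> borel_measurable Q"
      "\<And>i. v' i \<in> borel_measurable Q"
  shows "(\<integral>\<^sup>+q. grapheur_mix E \<sigma> \<sigma>' \<theta> \<phi> (\<lambda>i j. u i j q) (\<lambda>i. v i q) (\<lambda>i. v' i q) w z \<partial>Q)
    = grapheur_mix E \<sigma> \<sigma>' \<theta> \<phi> (\<lambda>i j. \<integral>\<^sup>+q. u i j q \<partial>Q) (\<lambda>i. \<integral>\<^sup>+q. v i q \<partial>Q) (\<lambda>i. \<integral>\<^sup>+q. v' i q \<partial>Q) w z"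
proof -
  interpret prob_space Q by fact
  have lin: "(\<integral>\<^sup>+q. a q + b q + c + d \<partial>Q) = (\<integral>\<^sup>+q. a q \<partial>Q) + (\<integral>\<^sup>+q. b q \<partial>Q) + c + d"
    if [measurable]: "a \<in> borel_measurable Q" "b \<in> borel_measurable Q" for a b and c d :: ennreal
    by (simp add: nn_integral_add emeasure_space_1)
  have "(\<integral>\<^sup>+q. (\<Sum>i. \<Sum>j. ennreal (E i j) * u i j q) \<partial>Q) = (\<Sum>i. \<Sum>j. ennreal (E i j) * (\<integral>\<^sup>+q. u i j q \<partial>Q))"
    by (simp add: nn_integral_suminf nn_integral_cmult)
  moreover have "(\<integral>\<^sup>+q. (\<Sum>i. ennreal (\<sigma> i) * v i q + ennreal (\<sigma>' i) * v' i q) \<partial>Q)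
      = (\<Sum>i. ennreal (\<sigma> i) * (\<integral>\<^sup>+q. v i q \<partial>Q) + ennreal (\<sigma>' i) * (\<integral>\<^sup>+q. v' i q \<partial>Q))"
    by (simp add: nn_integral_suminf nn_integral_add nn_integral_cmult)
  ultimately show ?thesis unfolding grapheur_mix_def by (subst lin) simp_all
qed

lemma countably_additive_grapheur_mix:
  assumes "\<And>i j. countably_additive M (u i j)" "\<And>i. countably_additive M (v i)"
    "\<And>i. countably_additive M (v' i)" "countably_additive M w" "countably_additive M z"
  shows "countably_additive M (\<lambda>A. grapheur_mix E \<sigma> \<sigma>' \<theta> \<phi> (\<lambda>i j. u i j A) (\<lambda>i. v i A) (\<lambda>i. v' i A) (w A) (z A))"
  unfolding grapheur_mix_def
  by (intro countably_additive_add countably_additive_cmult countably_additive_suminf assms)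

definition grapheur_premeasure ::
  "(nat \<Rightarrow> nat \<Rightarrow> real) \<Rightarrow> (nat \<Rightarrow> real) \<Rightarrow> (nat \<Rightarrow> real) \<Rightarrow> real \<Rightarrow> real \<Rightarrow> (nat \<Rightarrow> real)
    \<Rightarrow> (real \<times> real) set \<Rightarrow> ennreal" where
  "grapheur_premeasure E \<sigma> \<sigma>' \<theta> \<phi> t A = grapheur_mix E \<sigma> \<sigma>' \<theta> \<phi>
     (\<lambda>i j. indicator A (t i, t j))
     (\<lambda>i. emeasure lborel {x \<in> {0..1}. (t i, x) \<in> A}) (\<lambda>i. emeasure lborel {x \<in> {0..1}. (x, t i) \<in> A})
     (emeasure (lborel \<Otimes>\<^sub>M lborel) (A \<inter> ({0..1} \<times> {0..1}))) (emeasure lborel {x \<in> {0..1}. (x, x) \<in> A})"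

lemma grapheur_at_eq_measure_of:
  "grapheur_at E \<sigma> \<sigma>' \<theta> \<phi> t = measure_of (space sq_space) (sets sq_space) (grapheur_premeasure E \<sigma> \<sigma>' \<theta> \<phi> t)"
  unfolding grapheur_at_def grapheur_premeasure_def grapheur_mix_def ..

lemma countably_additive_emeasure_lborel_section:
  fixes h :: "real \<Rightarrow> real \<times> real"
  assumes "h \<in> lborel \<rightarrow>\<^sub>M borel"
  shows "countably_additive (sets sq_space) (\<lambda>A. emeasure lborel {x \<in> {0..1}. h x \<in> A})"
proof -
  have "{x \<in> {0..1}. h x \<in> A} = h -` A \<inter> {0..1}" for A by auto
  then show ?thesis
    using countably_additive_emeasure_vimage[OF assms, of "{0..1}" sq_space] by (simp add: sets_sq_space_iff subset_eq)
qed

lemma countably_additive_grapheur_premeasure: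
  "countably_additive (sets sq_space) (grapheur_premeasure E \<sigma> \<sigma>' \<theta> \<phi> t)"
  unfolding grapheur_premeasure_def[abs_def]
proof (rule countably_additive_grapheur_mix)
  have "(\<lambda>x. x) \<in> lborel \<Otimes>\<^sub>M lborel \<rightarrow>\<^sub>M (borel :: (real \<times> real) measure)"
    by (simp add: lborel_prod)
  moreover have "{0..1::real} \<times> {0..1::real} \<in> sets (lborel \<Otimes>\<^sub>M lborel)" by (intro pair_measureI) auto
  moreover have "sets sq_space \<subseteq> sets (borel :: (real \<times> real) measure)"
    by (simp add: sets_sq_space_iff subset_eq)
  ultimately have "countably_additive (sets sq_space)
      (\<lambda>A. emeasure (lborel \<Otimes>\<^sub>M lborel) ((\<lambda>x. x) -` A \<inter> ({0..1} \<times> {0..1})))"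
    by (rule countably_additive_emeasure_vimage)
  then show "countably_additive (sets sq_space) (\<lambda>A. emeasure (lborel \<Otimes>\<^sub>M lborel) (A \<inter> ({0..1} \<times> {0..1})))"
    by simp
  have [measurable]: "(\<lambda>y. (x, y)) \<in> lborel \<rightarrow>\<^sub>M borel" "(\<lambda>y. (y, x)) \<in> lborel \<rightarrow>\<^sub>M borel"
    "(\<lambda>y. (y, y)) \<in> lborel \<rightarrow>\<^sub>M (borel :: (real \<times> real) measure)" for x :: real
    unfolding borel_prod[symmetric] by simp_all
  show "countably_additive (sets sq_space) (\<lambda>A. emeasure lborel {x \<in> {0..1}. (t i, x) \<in> A})"
    "countably_additive (sets sq_space) (\<lambda>A. emeasure lborel {x \<in> {0..1}. (x, t i) \<in> A})" for i
    by (rule countably_additive_emeasure_lborel_section, measurable)+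
  show "countably_additive (sets sq_space) (\<lambda>A. emeasure lborel {x \<in> {0..1}. (x, x) \<in> A})"
    by (rule countably_additive_emeasure_lborel_section, measurable)
qed (rule countably_additive_indicator)

lemma emeasure_grapheur_at:
  "A \<in> sets sq_space \<Longrightarrow> emeasure (grapheur_at E \<sigma> \<sigma>' \<theta> \<phi> t) A = grapheur_premeasure E \<sigma> \<sigma>' \<theta> \<phi> t A"
  unfolding grapheur_at_eq_measure_of
  by (rule emeasure_measure_of_sigma[OF sets.sigma_algebra_axioms _ countably_additive_grapheur_premeasure])
     (simp add: positive_def grapheur_premeasure_def grapheur_mix_def)

lemma sets_grapheur_at[simp]: "sets (grapheur_at E \<sigma> \<sigma>' \<theta> \<phi> t) = sets sq_space"
  unfolding grapheur_at_eq_measure_of by (rule sets.sets_measure_of_eq)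

lemma grapheur_premeasure_le_1:
  assumes "grapheur_params E \<sigma> \<sigma>' \<theta> \<phi>"
  shows "grapheur_premeasure E \<sigma> \<sigma>' \<theta> \<phi> t A \<le> 1"
proof -
  have "emeasure lborel {x \<in> {0..1::real}. P x} \<le> emeasure lborel {0..1::real}" for P
    by (rule emeasure_mono) auto
  then have "emeasure lborel {x \<in> {0..1::real}. P x} \<le> 1" for P by simp
  moreover have "emeasure (lborel \<Otimes>\<^sub>M lborel) (A \<inter> ({0..1::real} \<times> {0..1::real})) \<le> 1"
    using emeasure_mono[of "A \<inter> ({0..1::real} \<times> {0..1})" "{0..1} \<times> {0..1}" "lborel \<Otimes>\<^sub>M lborel"]
    by (simp add: lborel.emeasure_pair_measure_Times)
  ultimately show ?thesis
    unfolding grapheur_premeasure_def using assms by (intro grapheur_mix_le) (auto simp: indicator_def)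
qed

lemma prob_space_iid_uniform: "prob_space iid_uniform"
  unfolding iid_uniform_def by (intro prob_space_PiM prob_space_uniform_measure) auto

lemma measurable_iid_component_uniform:
  "(\<lambda>t. t i) \<in> iid_uniform \<rightarrow>\<^sub>M uniform_measure lborel {0..1::real}"
  unfolding iid_uniform_def by (rule measurable_component_singleton) simp

lemma measurable_iid_component[measurable]: "(\<lambda>t. t i) \<in> iid_uniform \<rightarrow>\<^sub>M borel"
  using measurable_iid_component_uniform by (simp add: measurable_cong_sets[OF refl sets_uniform_measure])

lemma nn_integral_iid_indicator_le:
  assumes B: "B \<in> sets borel"
  shows "(\<integral>\<^sup>+t. indicator B (t i) \<partial>iid_uniform) \<le> emeasure lborel B"
proof -
  have "distr iid_uniform (uniform_measure lborel {0..1::real}) (\<lambda>t. t i) = uniform_measure lborel {0..1}"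
    unfolding iid_uniform_def by (intro distr_PiM_component prob_space_uniform_measure) auto
  then have "(\<integral>\<^sup>+t. indicator B (t i) \<partial>iid_uniform) = emeasure (uniform_measure lborel {0..1::real}) B"
    using B nn_integral_distr[OF measurable_iid_component_uniform[of i], of "indicator B"]
    by (simp add: borel_measurable_indicator)
  also have "\<dots> = emeasure lborel ({0..1} \<inter> B)"
    using B by (simp add: emeasure_uniform_measure divide_ennreal_def)
  also have "\<dots> \<le> emeasure lborel B" using B by (intro emeasure_mono) auto
  finally show ?thesis .
qed

lemma measurable_emeasure_lborel_section:
  fixes A :: "(real \<times> real) set"
  assumes A: "A \<in> sets borel" and h: "h \<in> Q \<rightarrow>\<^sub>M borel"
  shows "(\<lambda>q. emeasure lborel {x \<in> {0..1}. (h q, x) \<in> A}) \<in> borel_measurable Q"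
    "(\<lambda>q. emeasure lborel {x \<in> {0..1}. (x, h q) \<in> A}) \<in> borel_measurable Q"
proof -
  have "(\<lambda>p :: real \<times> real. (snd p, fst p)) \<in> borel \<rightarrow>\<^sub>M borel"
    unfolding borel_prod[symmetric] by measurable
  then have "(\<lambda>p :: real \<times> real. (snd p, fst p)) -` A \<in> sets borel"
    using measurable_sets[OF _ A, of "\<lambda>p. (snd p, fst p)" borel] by simp
  moreover have "UNIV \<times> {0..1::real} \<in> sets (borel :: (real \<times> real) measure)"
    by (intro borel_closed closed_Times) auto
  ultimately have sets: "A \<inter> (UNIV \<times> {0..1}) \<in> sets (lborel \<Otimes>\<^sub>M lborel)"
    "(\<lambda>p. (snd p, fst p)) -` A \<inter> (UNIV \<times> {0..1}) \<in> sets (lborel \<Otimes>\<^sub>M lborel)"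
    unfolding lborel_prod using A by (simp_all add: sets.Int)
  have "{x \<in> {0..1}. (y, x) \<in> A} = Pair y -` (A \<inter> (UNIV \<times> {0..1}))"
    "{x \<in> {0..1}. (x, y) \<in> A} = Pair y -` ((\<lambda>p. (snd p, fst p)) -` A \<inter> (UNIV \<times> {0..1}))" for y :: real
    by auto
  moreover have "h \<in> Q \<rightarrow>\<^sub>M lborel" using h by simp
  ultimately show "(\<lambda>q. emeasure lborel {x \<in> {0..1}. (h q, x) \<in> A}) \<in> borel_measurable Q"
    "(\<lambda>q. emeasure lborel {x \<in> {0..1}. (x, h q) \<in> A}) \<in> borel_measurable Q"
    using measurable_compose[OF _ lborel_pair.measurable_emeasure_Pair1[OF sets(1)]]
      measurable_compose[OF _ lborel_pair.measurable_emeasure_Pair1[OF sets(2)]]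
    by auto
qed

lemma measurable_grapheur_premeasure:
  assumes "A \<in> sets sq_space"
  shows "(\<lambda>t. grapheur_premeasure E \<sigma> \<sigma>' \<theta> \<phi> t A) \<in> borel_measurable iid_uniform"
proof -
  have A: "A \<in> sets borel" using assms by (simp add: sets_sq_space_iff)
  note [measurable] = measurable_emeasure_lborel_section[OF A measurable_iid_component]
  have [measurable]: "(\<lambda>t. (t i, t j)) \<in> iid_uniform \<rightarrow>\<^sub>M (borel :: (real \<times> real) measure)" for i j
    unfolding borel_prod[symmetric] by measurable
  show ?thesis using A unfolding grapheur_premeasure_def grapheur_mix_def by measurable
qed

lemma measurable_grapheur_at:
  assumes "grapheur_params E \<sigma> \<sigma>' \<theta> \<phi>"
  shows "grapheur_at E \<sigma> \<sigma>' \<theta> \<phi> \<in> iid_uniform \<rightarrow>\<^sub>M subprob_algebra sq_space"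
proof (rule measurable_subprob_algebra)
  fix t
  have space: "space (grapheur_at E \<sigma> \<sigma>' \<theta> \<phi> t) = space sq_space"
    by (rule sets_eq_imp_space_eq[OF sets_grapheur_at])
  show "subprob_space (grapheur_at E \<sigma> \<sigma>' \<theta> \<phi> t)"
  proof (rule subprob_spaceI)
    show "emeasure (grapheur_at E \<sigma> \<sigma>' \<theta> \<phi> t) (space (grapheur_at E \<sigma> \<sigma>' \<theta> \<phi> t)) \<le> 1"
      unfolding space emeasure_grapheur_at[OF sets.top] by (rule grapheur_premeasure_le_1[OF assms])
    show "space (grapheur_at E \<sigma> \<sigma>' \<theta> \<phi> t) \<noteq> {}" unfolding space space_sq_space by auto
  qed
  show "sets (grapheur_at E \<sigma> \<sigma>' \<theta> \<phi> t) = sets sq_space" by (rule sets_grapheur_at)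
next
  fix A assume A: "A \<in> sets sq_space"
  show "(\<lambda>t. emeasure (grapheur_at E \<sigma> \<sigma>' \<theta> \<phi> t) A) \<in> borel_measurable iid_uniform"
    unfolding emeasure_grapheur_at[OF A] by (rule measurable_grapheur_premeasure[OF A])
qed

lemma prob_space_grapheur_law:
  "grapheur_params E \<sigma> \<sigma>' \<theta> \<phi> \<Longrightarrow> prob_space (grapheur_law E \<sigma> \<sigma>' \<theta> \<phi>)"
  unfolding grapheur_law_def by (rule prob_space.prob_space_distr[OF prob_space_iid_uniform measurable_grapheur_at])

lemma sets_grapheur_law: "sets (grapheur_law E \<sigma> \<sigma>' \<theta> \<phi>) = sets (subprob_algebra sq_space)"
  by (simp add: grapheur_law_def)

lemma nn_integral_grapheur_law:
  assumes P: "grapheur_params E \<sigma> \<sigma>' \<theta> \<phi>" and A: "A \<in> sets sq_space"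
  shows "(\<integral>\<^sup>+m. emeasure m A \<partial>grapheur_law E \<sigma> \<sigma>' \<theta> \<phi>) = grapheur_mix E \<sigma> \<sigma>' \<theta> \<phi>
      (\<lambda>i j. \<integral>\<^sup>+t. indicator A (t i, t j) \<partial>iid_uniform)
      (\<lambda>i. \<integral>\<^sup>+t. emeasure lborel {x \<in> {0..1}. (t i, x) \<in> A} \<partial>iid_uniform)
      (\<lambda>i. \<integral>\<^sup>+t. emeasure lborel {x \<in> {0..1}. (x, t i) \<in> A} \<partial>iid_uniform)
      (emeasure (lborel \<Otimes>\<^sub>M lborel) (A \<inter> ({0..1} \<times> {0..1}))) (emeasure lborel {x \<in> {0..1}. (x, x) \<in> A})"
    (is "_ = ?R")
proof -
  have Ab: "A \<in> sets borel" using A by (simp add: sets_sq_space_iff)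
  have "(\<lambda>t. (t i, t j)) \<in> iid_uniform \<rightarrow>\<^sub>M (borel :: (real \<times> real) measure)" for i j
    unfolding borel_prod[symmetric] by measurable
  then have ind: "(\<lambda>t. indicator A (t i, t j) :: ennreal) \<in> borel_measurable iid_uniform" for i j
    using Ab by measurable
  have "(\<integral>\<^sup>+m. emeasure m A \<partial>grapheur_law E \<sigma> \<sigma>' \<theta> \<phi>)
      = (\<integral>\<^sup>+t. grapheur_premeasure E \<sigma> \<sigma>' \<theta> \<phi> t A \<partial>iid_uniform)"
    unfolding grapheur_law_def using measurable_emeasure_subprob_algebra[OF A]
    by (simp add: nn_integral_distr[OF measurable_grapheur_at[OF P]] emeasure_grapheur_at[OF A])
  also have "\<dots> = ?R"
    unfolding grapheur_premeasure_def
    by (rule nn_integral_grapheur_mix[OF prob_space_iid_uniform])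
       (fact ind measurable_emeasure_lborel_section[OF Ab measurable_iid_component])+
  finally show ?thesis .
qed

lemma
  assumes B: "B \<in> sets borel"
  shows nn_integral_iid_le_indicator:
      "(\<And>t. f t \<le> indicator B (t i)) \<Longrightarrow> (\<integral>\<^sup>+t. f t \<partial>iid_uniform) \<le> emeasure lborel B"
    and nn_integral_iid_le_const:
      "(\<And>t. f t \<le> emeasure lborel B) \<Longrightarrow> (\<integral>\<^sup>+t. f t \<partial>iid_uniform) \<le> emeasure lborel B"
    and emeasure_lborel_section_le:
      "(\<And>x. x \<in> {0..1} \<Longrightarrow> Q x \<Longrightarrow> x \<in> B) \<Longrightarrow> emeasure lborel {x \<in> {0..1::real}. Q x} \<le> emeasure lborel B"
proof -
  show "(\<integral>\<^sup>+t. f t \<partial>iid_uniform) \<le> emeasure lborel B" if "\<And>t. f t \<le> indicator B (t i)"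
  proof -
    have "(\<integral>\<^sup>+t. f t \<partial>iid_uniform) \<le> (\<integral>\<^sup>+t. indicator B (t i) \<partial>iid_uniform)"
      using that by (intro nn_integral_mono) auto
    then show ?thesis using nn_integral_iid_indicator_le[OF B, of i] by (rule order_trans)
  qed
  show "(\<integral>\<^sup>+t. f t \<partial>iid_uniform) \<le> emeasure lborel B" if "\<And>t. f t \<le> emeasure lborel B"
  proof -
    have "(\<integral>\<^sup>+t. f t \<partial>iid_uniform) \<le> (\<integral>\<^sup>+t. emeasure lborel B \<partial>iid_uniform)"
      using that by (intro nn_integral_mono) auto
    then show ?thesis by (simp add: prob_space.emeasure_space_1[OF prob_space_iid_uniform])
  qed
  show "emeasure lborel {x \<in> {0..1::real}. Q x} \<le> emeasure lborel B" if "\<And>x. x \<in> {0..1} \<Longrightarrow> Q x \<Longrightarrow> x \<in> B"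
    using that B by (intro emeasure_mono) auto
qed

text \<open>The points \<open>T\<^sub>i\<close> being uniform, each component of a grapheur has expected mass at most
  \<open>\<lambda> B\<close> on the strips \<open>B \<times> [0,1]\<close> and \<open>[0,1] \<times> B\<close>.\<close>

lemma nn_integral_grapheur_law_row_strip_le:
  assumes P: "grapheur_params E \<sigma> \<sigma>' \<theta> \<phi>" and B: "B \<in> sets borel" "B \<subseteq> {0..1}"
  shows "(\<integral>\<^sup>+m. emeasure m (B \<times> {0..1}) \<partial>grapheur_law E \<sigma> \<sigma>' \<theta> \<phi>) \<le> emeasure lborel B"
  unfolding nn_integral_grapheur_law[OF P Times_in_sets_sq_space[OF B(1) atLeastAtMost_borel B(2) order_refl]]
proof (rule grapheur_mix_le[OF P])
  show "(\<integral>\<^sup>+t. emeasure lborel {x \<in> {0..1::real}. (t i, x) \<in> B \<times> {0..1}} \<partial>iid_uniform) \<le> emeasure lborel B" for i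
  proof (rule nn_integral_iid_le_indicator[OF B(1)])
    fix t :: "nat \<Rightarrow> real"
    have eq: "{x \<in> {0..1::real}. (t i, x) \<in> B \<times> {0..1}} = (if t i \<in> B then {0..1} else {})" by auto
    show "emeasure lborel {x \<in> {0..1::real}. (t i, x) \<in> B \<times> {0..1}} \<le> indicator B (t i)"
      unfolding eq by (simp add: emeasure_lborel_Icc)
  qed
  show "(\<integral>\<^sup>+t. indicator (B \<times> {0..1}) (t i, t j) \<partial>iid_uniform) \<le> emeasure lborel B" for i j
    by (intro nn_integral_iid_le_indicator[OF B(1), of _ i]) (simp add: indicator_def)
  show "(\<integral>\<^sup>+t. emeasure lborel {x \<in> {0..1::real}. (x, t i) \<in> B \<times> {0..1}} \<partial>iid_uniform) \<le> emeasure lborel B" for i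
    by (intro nn_integral_iid_le_const emeasure_lborel_section_le B) auto
  show "emeasure lborel {x \<in> {0..1::real}. (x, x) \<in> B \<times> {0..1}} \<le> emeasure lborel B"
    by (intro emeasure_lborel_section_le B) auto
  have "(B \<times> {0..1}) \<inter> ({0..1} \<times> {0..1}) = B \<times> {0..1::real}" using B(2) by auto
  then show "emeasure (lborel \<Otimes>\<^sub>M lborel) ((B \<times> {0..1}) \<inter> ({0..1} \<times> {0..1::real})) \<le> emeasure lborel B"
    using B by (simp add: lborel.emeasure_pair_measure_Times)
qed

lemma nn_integral_grapheur_law_col_strip_le:
  assumes P: "grapheur_params E \<sigma> \<sigma>' \<theta> \<phi>" and B: "B \<in> sets borel" "B \<subseteq> {0..1}"
  shows "(\<integral>\<^sup>+m. emeasure m ({0..1} \<times> B) \<partial>grapheur_law E \<sigma> \<sigma>' \<theta> \<phi>) \<le> emeasure lborel B"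
  unfolding nn_integral_grapheur_law[OF P Times_in_sets_sq_space[OF atLeastAtMost_borel B(1) order_refl B(2)]]
proof (rule grapheur_mix_le[OF P])
  show "(\<integral>\<^sup>+t. emeasure lborel {x \<in> {0..1::real}. (x, t i) \<in> {0..1} \<times> B} \<partial>iid_uniform) \<le> emeasure lborel B" for i
  proof (rule nn_integral_iid_le_indicator[OF B(1)])
    fix t :: "nat \<Rightarrow> real"
    have eq: "{x \<in> {0..1::real}. (x, t i) \<in> {0..1} \<times> B} = (if t i \<in> B then {0..1} else {})" by auto
    show "emeasure lborel {x \<in> {0..1::real}. (x, t i) \<in> {0..1} \<times> B} \<le> indicator B (t i)"
      unfolding eq by (simp add: emeasure_lborel_Icc)
  qed
  show "(\<integral>\<^sup>+t. indicator ({0..1} \<times> B) (t i, t j) \<partial>iid_uniform) \<le> emeasure lborel B" for i j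
    by (intro nn_integral_iid_le_indicator[OF B(1), of _ j]) (simp add: indicator_def)
  show "(\<integral>\<^sup>+t. emeasure lborel {x \<in> {0..1::real}. (t i, x) \<in> {0..1} \<times> B} \<partial>iid_uniform) \<le> emeasure lborel B" for i
    by (intro nn_integral_iid_le_const emeasure_lborel_section_le B) auto
  show "emeasure lborel {x \<in> {0..1::real}. (x, x) \<in> {0..1} \<times> B} \<le> emeasure lborel B"
    by (intro emeasure_lborel_section_le B) auto
  have "({0..1} \<times> B) \<inter> ({0..1} \<times> {0..1}) = {0..1::real} \<times> B" using B(2) by auto
  then show "emeasure (lborel \<Otimes>\<^sub>M lborel) (({0..1} \<times> B) \<inter> ({0..1::real} \<times> {0..1})) \<le> emeasure lborel B"
    using B by (simp add: lborel.emeasure_pair_measure_Times)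
qed

definition expected_marginals_le_lborel :: "(real \<times> real) measure measure \<Rightarrow> bool" where
  "expected_marginals_le_lborel M \<longleftrightarrow> (\<forall>B \<in> sets borel. B \<subseteq> {0..1} \<longrightarrow>
     (\<integral>\<^sup>+m. emeasure m (B \<times> {0..1}) \<partial>M) \<le> emeasure lborel B \<and>
     (\<integral>\<^sup>+m. emeasure m ({0..1} \<times> B) \<partial>M) \<le> emeasure lborel B)"

lemma grapheursD:
  assumes "M \<in> grapheurs"
  shows "prob_space M" "sets M = sets (subprob_algebra sq_space)" "expected_marginals_le_lborel M"
proof -
  obtain E \<sigma> \<sigma>' \<theta> \<phi> where M: "M = grapheur_law E \<sigma> \<sigma>' \<theta> \<phi>" and P: "grapheur_params E \<sigma> \<sigma>' \<theta> \<phi>"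
    using assms unfolding grapheurs_def by blast
  show "prob_space M" "sets M = sets (subprob_algebra sq_space)" "expected_marginals_le_lborel M"
    unfolding M expected_marginals_le_lborel_def
    using prob_space_grapheur_law[OF P] sets_grapheur_law
      nn_integral_grapheur_law_row_strip_le[OF P] nn_integral_grapheur_law_col_strip_le[OF P]
    by blast+
qed

section \<open>Comparing the two distances\<close>

lemma W_1_eq_INF: "W_1 k P Q = (INF C\<in>couplings P Q. \<integral>\<^sup>+p. ennreal (mat_l1 k (fst p) (snd p)) \<partial>C)"
  unfolding W_1_def mat_l1_def ..

theorem W_1_le_W_box:
  assumes sM: "sets M = sets (subprob_algebra sq_space)" and sN: "sets N = sets (subprob_algebra sq_space)"
    and k: "k \<ge> 1"
  shows "W_1 k (G_law k M) (G_law k N) \<le> of_nat (k^2) * W_box M N"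
  unfolding W_box_def
proof (rule le_mult_INF_ennreal)
  show "of_nat (k^2) \<noteq> (0::ennreal)" using k by simp
  show "of_nat (k^2) \<noteq> (top::ennreal)" by (rule ennreal_of_nat_neq_top)
  fix C assume C: "C \<in> couplings M N"
  let ?G = "map_prod (grid_matrix k) (grid_matrix k)"
  let ?R = "{(S, T). is_interval S \<and> S \<subseteq> {0..1} \<and> is_interval T \<and> T \<subseteq> {0..1}}"
  let ?box = "\<lambda>(S, T). \<integral>\<^sup>+ mm. ennreal \<bar>measure (fst mm) (S \<times> T) - measure (snd mm) (S \<times> T)\<bar> \<partial>C"
  have GM: "grid_matrix k \<in> M \<rightarrow>\<^sub>M mat_space k" and GN: "grid_matrix k \<in> N \<rightarrow>\<^sub>M mat_space k"
    using measurable_grid_matrix by (simp_all add: measurable_cong_sets[OF sM refl] measurable_cong_sets[OF sN refl])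
  have "distr C (mat_space k \<Otimes>\<^sub>M mat_space k) ?G \<in> couplings (G_law k M) (G_law k N)"
    unfolding G_law_eq_distr_grid_matrix by (rule distr_map_prod_in_couplings[OF C GM GN])
  then have "W_1 k (G_law k M) (G_law k N) \<le> (\<integral>\<^sup>+p. ennreal (mat_l1 k (fst p) (snd p)) \<partial>distr C (mat_space k \<Otimes>\<^sub>M mat_space k) ?G)"
    unfolding W_1_eq_INF by (rule INF_lower)
  also have "\<dots> = (\<integral>\<^sup>+p. (\<Sum>ij\<in>{..<k} \<times> {..<k}. ennreal \<bar>grid_matrix k (fst p) ij - grid_matrix k (snd p) ij\<bar>) \<partial>C)"
    using measurable_mat_l1[of k] couplingsD(5,6)[OF C] GM GN
    by (subst nn_integral_distr) (auto simp: mat_l1_def sum_ennreal measurable_pair_iff)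
  also have "\<dots> = (\<Sum>ij\<in>{..<k} \<times> {..<k}. \<integral>\<^sup>+p. ennreal \<bar>grid_matrix k (fst p) ij - grid_matrix k (snd p) ij\<bar> \<partial>C)"
    using couplingsD(5,6)[OF C] GM GN
    by (intro nn_integral_sum) (auto simp: mat_space_def)
  also have "\<dots> \<le> (\<Sum>ij\<in>{..<k} \<times> {..<k}. SUP ST\<in>?R. ?box ST)"
  proof (rule sum_mono)
    fix ij assume ij: "ij \<in> {..<k} \<times> {..<k}"
    have "(I_int k (fst ij), I_int k (snd ij)) \<in> ?R"
      using ij by (auto simp: is_interval_I_int intro!: I_int_subset)
    then have "?box (I_int k (fst ij), I_int k (snd ij)) \<le> (SUP ST\<in>?R. ?box ST)" by (rule SUP_upper)
    then show "(\<integral>\<^sup>+p. ennreal \<bar>grid_matrix k (fst p) ij - grid_matrix k (snd p) ij\<bar> \<partial>C) \<le> (SUP ST\<in>?R. ?box ST)"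
      using ij by (simp add: grid_matrix_def)
  qed
  also have "\<dots> = of_nat (k^2) * (SUP ST\<in>?R. ?box ST)"
    by (simp add: power2_eq_square)
  finally show "W_1 k (G_law k M) (G_law k N) \<le> of_nat (k^2) * (SUP ST\<in>?R. ?box ST)" .
qed

lemma measurable_strips_measure:
  assumes "eS \<in> sets borel" "eS \<subseteq> {0..1}" "eT \<in> sets borel" "eT \<subseteq> {0..1}"
  shows "(\<lambda>m. ennreal (measure m (eS \<times> {0..1}) + measure m ({0..1} \<times> eT)))
    \<in> borel_measurable (subprob_algebra sq_space)"
  using assms by (intro measurable_compose[OF _ measurable_ennreal] borel_measurable_add
      measurable_measure_subprob_algebra Times_in_sets_sq_space) auto

lemma nn_integral_strips_le:
  assumes sM: "sets M = sets (subprob_algebra sq_space)" and M: "expected_marginals_le_lborel M"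
    and eS: "eS \<in> sets borel" "eS \<subseteq> {0..1}" and eT: "eT \<in> sets borel" "eT \<subseteq> {0..1}"
  shows "(\<integral>\<^sup>+m. ennreal (measure m (eS \<times> {0..1}) + measure m ({0..1} \<times> eT)) \<partial>M)
    \<le> emeasure lborel eS + emeasure lborel eT"
proof -
  have E: "eS \<times> {0..1} \<in> sets sq_space" "{0..1} \<times> eT \<in> sets sq_space"
    using eS eT by (simp_all add: Times_in_sets_sq_space)
  then have [measurable]: "(\<lambda>m. emeasure m (eS \<times> {0..1})) \<in> borel_measurable M"
    "(\<lambda>m. emeasure m ({0..1} \<times> eT)) \<in> borel_measurable M"
    by (simp_all add: measurable_cong_sets[OF sM refl] measurable_emeasure_subprob_algebra)
  have "(\<integral>\<^sup>+m. ennreal (measure m (eS \<times> {0..1}) + measure m ({0..1} \<times> eT)) \<partial>M)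
      = (\<integral>\<^sup>+m. emeasure m (eS \<times> {0..1}) + emeasure m ({0..1} \<times> eT) \<partial>M)"
  proof (rule nn_integral_cong)
    fix m assume "m \<in> space M"
    then have "finite_measure m" "sets m = sets sq_space"
      using finite_measure_subprob_algebra_sq_space sets_eq_imp_space_eq[OF sM] by auto
    then show "ennreal (measure m (eS \<times> {0..1}) + measure m ({0..1} \<times> eT))
        = emeasure m (eS \<times> {0..1}) + emeasure m ({0..1} \<times> eT)"
      using E by (simp add: finite_measure.emeasure_eq_measure ennreal_plus)
  qed
  also have "\<dots> = (\<integral>\<^sup>+m. emeasure m (eS \<times> {0..1}) \<partial>M) + (\<integral>\<^sup>+m. emeasure m ({0..1} \<times> eT) \<partial>M)"
    by (rule nn_integral_add) measurable
  also have "\<dots> \<le> emeasure lborel eS + emeasure lborel eT"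
    using M eS eT unfolding expected_marginals_le_lborel_def by (intro add_mono) auto
  finally show ?thesis .
qed

lemma rectangle_diff_le_grid:
  assumes k: "k \<ge> 1" and S: "is_interval S" "S \<subseteq> {0..1}" and T: "is_interval T" "T \<subseteq> {0..1}"
  obtains eS eT where "eS \<in> sets borel" "eS \<subseteq> {0..1}" "emeasure lborel eS \<le> ennreal (1 / real k)"
    "eT \<in> sets borel" "eT \<subseteq> {0..1}" "emeasure lborel eT \<le> ennreal (1 / real k)"
    "\<And>m n. m \<in> space (subprob_algebra sq_space) \<Longrightarrow> n \<in> space (subprob_algebra sq_space) \<Longrightarrow>
      \<bar>measure m (S \<times> T) - measure n (S \<times> T)\<bar> \<le> mat_l1 k (grid_matrix k m) (grid_matrix k n)
        + (measure m (eS \<times> {0..1}) + measure m ({0..1} \<times> eT))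
        + (measure n (eS \<times> {0..1}) + measure n ({0..1} \<times> eT))"
proof -
  obtain P Q eS eT where PQ: "P \<subseteq> {..<k}" "Q \<subseteq> {..<k}"
    and eS: "eS \<in> sets borel" "eS \<subseteq> {0..1}" "emeasure lborel eS \<le> ennreal (1 / real k)"
    and eT: "eT \<in> sets borel" "eT \<subseteq> {0..1}" "emeasure lborel eT \<le> ennreal (1 / real k)"
    and approx: "\<And>m. m \<in> space (subprob_algebra sq_space) \<Longrightarrow>
      \<bar>measure m (S \<times> T) - (\<Sum>ij\<in>P \<times> Q. grid_matrix k m ij)\<bar> \<le> measure m (eS \<times> {0..1}) + measure m ({0..1} \<times> eT)"
    using rectangle_grid_approx[OF k S T] by blast
  have "\<bar>(\<Sum>ij\<in>P \<times> Q. grid_matrix k m ij) - (\<Sum>ij\<in>P \<times> Q. grid_matrix k n ij)\<bar>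
      \<le> mat_l1 k (grid_matrix k m) (grid_matrix k n)" for m n
  proof -
    have "\<bar>(\<Sum>ij\<in>P \<times> Q. grid_matrix k m ij) - (\<Sum>ij\<in>P \<times> Q. grid_matrix k n ij)\<bar>
        \<le> (\<Sum>ij\<in>P \<times> Q. \<bar>grid_matrix k m ij - grid_matrix k n ij\<bar>)"
      by (simp only: sum_subtractf[symmetric] sum_abs)
    also have "\<dots> \<le> mat_l1 k (grid_matrix k m) (grid_matrix k n)"
      unfolding mat_l1_def using PQ by (intro sum_mono2) auto
    finally show ?thesis .
  qed
  then have "\<bar>measure m (S \<times> T) - measure n (S \<times> T)\<bar> \<le> mat_l1 k (grid_matrix k m) (grid_matrix k n)
      + (measure m (eS \<times> {0..1}) + measure m ({0..1} \<times> eT)) + (measure n (eS \<times> {0..1}) + measure n ({0..1} \<times> eT))"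
    if "m \<in> space (subprob_algebra sq_space)" "n \<in> space (subprob_algebra sq_space)" for m n
    using approx[OF that(1)] approx[OF that(2)] by (smt (verit))
  with eS eT that show ?thesis by blast
qed

lemma nn_integral_box_le_grid:
  assumes D: "D \<in> couplings M N"
    and sM: "sets M = sets (subprob_algebra sq_space)" and sN: "sets N = sets (subprob_algebra sq_space)"
    and mM: "expected_marginals_le_lborel M" and mN: "expected_marginals_le_lborel N"
    and k: "k \<ge> 1" and S: "is_interval S" "S \<subseteq> {0..1}" and T: "is_interval T" "T \<subseteq> {0..1}"
  shows "(\<integral>\<^sup>+p. ennreal \<bar>measure (fst p) (S \<times> T) - measure (snd p) (S \<times> T)\<bar> \<partial>D)
    \<le> (\<integral>\<^sup>+p. ennreal (mat_l1 k (grid_matrix k (fst p)) (grid_matrix k (snd p))) \<partial>D) + ennreal (4 / real k)"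
proof -
  obtain eS eT where eS: "eS \<in> sets borel" "eS \<subseteq> {0..1}" "emeasure lborel eS \<le> ennreal (1 / real k)"
    and eT: "eT \<in> sets borel" "eT \<subseteq> {0..1}" "emeasure lborel eT \<le> ennreal (1 / real k)"
    and diff: "\<And>m n. m \<in> space (subprob_algebra sq_space) \<Longrightarrow> n \<in> space (subprob_algebra sq_space) \<Longrightarrow>
      \<bar>measure m (S \<times> T) - measure n (S \<times> T)\<bar> \<le> mat_l1 k (grid_matrix k m) (grid_matrix k n)
        + (measure m (eS \<times> {0..1}) + measure m ({0..1} \<times> eT))
        + (measure n (eS \<times> {0..1}) + measure n ({0..1} \<times> eT))"
    using rectangle_diff_le_grid[OF k S T] by blast
  define err where "err m = measure m (eS \<times> {0..1}) + measure m ({0..1} \<times> eT)" for m :: "(real \<times> real) measure"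
  let ?l1 = "\<lambda>p. mat_l1 k (grid_matrix k (fst p)) (grid_matrix k (snd p))"
  have errM[measurable]: "(\<lambda>m. ennreal (err m)) \<in> borel_measurable M"
    and errN[measurable]: "(\<lambda>m. ennreal (err m)) \<in> borel_measurable N"
    using measurable_strips_measure[OF eS(1,2) eT(1,2)] unfolding err_def
    by (simp_all add: measurable_cong_sets[OF sM refl] measurable_cong_sets[OF sN refl])
  have "grid_matrix k \<in> M \<rightarrow>\<^sub>M mat_space k" "grid_matrix k \<in> N \<rightarrow>\<^sub>M mat_space k"
    using measurable_grid_matrix by (simp_all add: measurable_cong_sets[OF sM refl] measurable_cong_sets[OF sN refl])
  from measurable_compose[OF measurable_map_prod_couplings[OF D this] measurable_mat_l1]
  have [measurable]: "(\<lambda>p. ennreal (?l1 p)) \<in> borel_measurable D" by (simp add: comp_def)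
  have [measurable]: "(\<lambda>p. ennreal (err (fst p))) \<in> borel_measurable D" "(\<lambda>p. ennreal (err (snd p))) \<in> borel_measurable D"
    using couplingsD(5,6)[OF D] by measurable
  have "(\<integral>\<^sup>+p. ennreal \<bar>measure (fst p) (S \<times> T) - measure (snd p) (S \<times> T)\<bar> \<partial>D)
      \<le> (\<integral>\<^sup>+p. ennreal (?l1 p) + ennreal (err (fst p)) + ennreal (err (snd p)) \<partial>D)"
  proof (rule nn_integral_mono)
    fix p assume "p \<in> space D"
    then have "fst p \<in> space (subprob_algebra sq_space)" "snd p \<in> space (subprob_algebra sq_space)"
      using measurable_space[OF couplingsD(5)[OF D]] measurable_space[OF couplingsD(6)[OF D]]
        sets_eq_imp_space_eq[OF sM] sets_eq_imp_space_eq[OF sN] by auto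
    from diff[OF this] show "ennreal \<bar>measure (fst p) (S \<times> T) - measure (snd p) (S \<times> T)\<bar>
        \<le> ennreal (?l1 p) + ennreal (err (fst p)) + ennreal (err (snd p))"
      by (simp add: ennreal_plus[symmetric] mat_l1_nonneg err_def del: ennreal_plus)
  qed
  also have "\<dots> = (\<integral>\<^sup>+p. ennreal (?l1 p) \<partial>D) + (\<integral>\<^sup>+m. ennreal (err m) \<partial>M) + (\<integral>\<^sup>+n. ennreal (err n) \<partial>N)"
    by (simp add: nn_integral_add nn_integral_couplings_fst[OF D errM] nn_integral_couplings_snd[OF D errN])
  also have "(\<integral>\<^sup>+m. ennreal (err m) \<partial>M) \<le> ennreal (2 / real k)"
    using nn_integral_strips_le[OF sM mM eS(1,2) eT(1,2)] add_mono[OF eS(3) eT(3)]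
    by (simp add: err_def ennreal_plus[symmetric] del: ennreal_plus)
  also have "(\<integral>\<^sup>+n. ennreal (err n) \<partial>N) \<le> ennreal (2 / real k)"
    using nn_integral_strips_le[OF sN mN eS(1,2) eT(1,2)] add_mono[OF eS(3) eT(3)]
    by (simp add: err_def ennreal_plus[symmetric] del: ennreal_plus)
  finally show ?thesis
    by (simp add: add.assoc ennreal_plus[symmetric] del: ennreal_plus)
qed

text \<open>Conditioning on the grid matrix itself would need a disintegration; conditioning on its
  quantization, which takes finitely many values, is elementary (\<open>couplings_lift_finite\<close>).
  Quantizing costs \<open>2 k\<^sup>2 / L\<close>, once on each side of the coupling.\<close>

lemma couplings_quantized_grid_lift:
  assumes pM: "prob_space M" and pN: "prob_space N"
    and sM: "sets M = sets (subprob_algebra sq_space)" and sN: "sets N = sets (subprob_algebra sq_space)"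
    and C: "C \<in> couplings (G_law k M) (G_law k N)"
  obtains D where "D \<in> couplings M N"
    "(\<integral>\<^sup>+p. ennreal (mat_l1 k (quantize_mat k L (grid_matrix k (fst p))) (quantize_mat k L (grid_matrix k (snd p)))) \<partial>D)
      = (\<integral>\<^sup>+p. ennreal (mat_l1 k (quantize_mat k L (fst p)) (quantize_mat k L (snd p))) \<partial>C)"
proof -
  let ?A = "quantized_mats k L" and ?q = "quantize_mat k L"
  let ?f = "\<lambda>m. ?q (grid_matrix k m)"
  have GM: "grid_matrix k \<in> M \<rightarrow>\<^sub>M mat_space k" and GN: "grid_matrix k \<in> N \<rightarrow>\<^sub>M mat_space k"
    using measurable_grid_matrix by (simp_all add: measurable_cong_sets[OF sM refl] measurable_cong_sets[OF sN refl])
  have qM: "?q \<in> G_law k M \<rightarrow>\<^sub>M count_space ?A" and qN: "?q \<in> G_law k N \<rightarrow>\<^sub>M count_space ?A"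
    using measurable_quantize_mat by (simp_all add: G_law_eq_distr_grid_matrix)
  have fM: "?f \<in> M \<rightarrow>\<^sub>M count_space ?A" and fN: "?f \<in> N \<rightarrow>\<^sub>M count_space ?A"
    using measurable_compose[OF GM measurable_quantize_mat] measurable_compose[OF GN measurable_quantize_mat]
    by (simp_all add: comp_def)
  define C' where "C' = distr C (count_space ?A \<Otimes>\<^sub>M count_space ?A) (map_prod ?q ?q)"
  have "distr (G_law k M) (count_space ?A) ?q = distr M (count_space ?A) ?f"
    "distr (G_law k N) (count_space ?A) ?q = distr N (count_space ?A) ?f"
    using distr_distr[OF measurable_quantize_mat GM] distr_distr[OF measurable_quantize_mat GN]
    by (simp_all add: G_law_eq_distr_grid_matrix comp_def)
  then have "C' \<in> couplings (distr M (count_space ?A) ?f) (distr N (count_space ?A) ?f)"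
    using distr_map_prod_in_couplings[OF C qM qN] by (simp add: C'_def)
  then obtain D where D: "D \<in> couplings M N"
    and DC': "distr D (count_space ?A \<Otimes>\<^sub>M count_space ?A) (map_prod ?f ?f) = C'"
    by (rule couplings_lift_finite[OF pM pN finite_quantized_mats finite_quantized_mats fM fN])
  have "count_space ?A \<Otimes>\<^sub>M count_space ?A = count_space (?A \<times> ?A)"
    by (intro pair_measure_countable countable_finite finite_quantized_mats)
  then have l1: "(\<lambda>p. ennreal (mat_l1 k (fst p) (snd p)))
      \<in> borel_measurable (distr X (count_space ?A \<Otimes>\<^sub>M count_space ?A) h)" for X :: "('c \<times> 'c) measure" and h
    by (subst measurable_cong_sets[OF sets_distr refl]) simp
  have "(\<integral>\<^sup>+p. ennreal (mat_l1 k (?f (fst p)) (?f (snd p))) \<partial>D) = (\<integral>\<^sup>+p. ennreal (mat_l1 k (fst p) (snd p)) \<partial>C')"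
    unfolding DC'[symmetric] by (simp add: nn_integral_distr[OF measurable_map_prod_couplings[OF D fM fN] l1])
  also have "\<dots> = (\<integral>\<^sup>+p. ennreal (mat_l1 k (?q (fst p)) (?q (snd p))) \<partial>C)"
    unfolding C'_def by (simp add: nn_integral_distr[OF measurable_map_prod_couplings[OF C qM qN] l1])
  finally show ?thesis using D that by blast
qed

lemma couplings_grid_lift:
  assumes pM: "prob_space M" and pN: "prob_space N"
    and sM: "sets M = sets (subprob_algebra sq_space)" and sN: "sets N = sets (subprob_algebra sq_space)"
    and L: "L \<ge> 1" and C: "C \<in> couplings (G_law k M) (G_law k N)"
  obtains D where "D \<in> couplings M N"
    "(\<integral>\<^sup>+p. ennreal (mat_l1 k (grid_matrix k (fst p)) (grid_matrix k (snd p))) \<partial>D)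
      \<le> (\<integral>\<^sup>+p. ennreal (mat_l1 k (fst p) (snd p)) \<partial>C) + ennreal (4 * real (k^2) / real L)"
proof -
  let ?G = "grid_matrix k" and ?q = "quantize_mat k L" and ?c = "ennreal (2 * real (k^2) / real L)"
  obtain D where D: "D \<in> couplings M N"
    and DC: "(\<integral>\<^sup>+p. ennreal (mat_l1 k (?q (?G (fst p))) (?q (?G (snd p)))) \<partial>D)
      = (\<integral>\<^sup>+p. ennreal (mat_l1 k (?q (fst p)) (?q (snd p))) \<partial>C)"
    using couplings_quantized_grid_lift[OF pM pN sM sN C] by blast
  have "?G \<in> M \<rightarrow>\<^sub>M mat_space k" "?G \<in> N \<rightarrow>\<^sub>M mat_space k"
    using measurable_grid_matrix by (simp_all add: measurable_cong_sets[OF sM refl] measurable_cong_sets[OF sN refl])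
  note GG = measurable_map_prod_couplings[OF D this]
  have sC: "sets C = sets (mat_space k \<Otimes>\<^sub>M mat_space k)"
    using couplingsD(2)[OF C] by (simp add: G_law_eq_distr_grid_matrix)
  have l1q: "(\<lambda>p. ennreal (mat_l1 k (?q (fst p)) (?q (snd p)))) \<in> borel_measurable (mat_space k \<Otimes>\<^sub>M mat_space k)"
    using measurable_compose[OF measurable_map_prod[OF measurable_quantize_mat_mat_space measurable_quantize_mat_mat_space]
        measurable_mat_l1] by (simp add: comp_def)
  have "\<And>p ij. p \<in> space D \<Longrightarrow> ij \<in> {..<k} \<times> {..<k} \<Longrightarrow> ?G (fst p) ij \<in> {0..1} \<and> ?G (snd p) ij \<in> {0..1}"
    using measurable_space[OF couplingsD(5)[OF D]] measurable_space[OF couplingsD(6)[OF D]]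
      sets_eq_imp_space_eq[OF sM] sets_eq_imp_space_eq[OF sN] grid_matrix_mem_unit by simp
  then have "(\<integral>\<^sup>+p. ennreal (mat_l1 k (?G (fst p)) (?G (snd p))) \<partial>D)
      \<le> (\<integral>\<^sup>+p. ennreal (mat_l1 k (?q (?G (fst p))) (?q (?G (snd p)))) \<partial>D) + ?c"
    using measurable_compose[OF GG l1q] couplingsD(1)[OF D] L
    by (intro nn_integral_mat_l1_le_quantize_mat) (simp_all add: comp_def)
  also have "\<dots> \<le> (\<integral>\<^sup>+p. ennreal (mat_l1 k (fst p) (snd p)) \<partial>C) + ?c + ?c"
    unfolding DC using couplingsD(1)[OF C] L measurable_mat_l1[of k]
    by (intro add_right_mono nn_integral_mat_l1_quantize_mat_le) (simp_all add: measurable_cong_sets[OF sC refl])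
  also have "\<dots> = (\<integral>\<^sup>+p. ennreal (mat_l1 k (fst p) (snd p)) \<partial>C) + ennreal (4 * real (k^2) / real L)"
    by (simp add: add.assoc ennreal_plus[symmetric] del: ennreal_plus)
  finally show ?thesis using D that by blast
qed

theorem W_box_le_W_1:
  assumes pM: "prob_space M" and pN: "prob_space N"
    and sM: "sets M = sets (subprob_algebra sq_space)" and sN: "sets N = sets (subprob_algebra sq_space)"
    and mM: "expected_marginals_le_lborel M" and mN: "expected_marginals_le_lborel N" and k: "k \<ge> 1"
  shows "W_box M N \<le> W_1 k (G_law k M) (G_law k N) + ennreal (4 / real k)"
proof (rule ennreal_le_epsilon)
  fix e :: real assume e: "0 < e"
  obtain n :: nat where "4 * real (k^2) / e < real n" using reals_Archimedean2 by blast
  then have "4 * real (k^2) < e * real n" using e by (simp add: pos_divide_less_eq mult.commute)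
  then have L: "Suc n \<ge> 1" "4 * real (k^2) / real (Suc n) \<le> e"
    using e by (simp_all add: pos_divide_le_eq distrib_left)
  let ?c = "ennreal (4 * real (k^2) / real (Suc n)) + ennreal (4 / real k)"
  have "W_box M N \<le> (\<integral>\<^sup>+p. ennreal (mat_l1 k (fst p) (snd p)) \<partial>C) + ?c"
    if C: "C \<in> couplings (G_law k M) (G_law k N)" for C
  proof -
    obtain D where D: "D \<in> couplings M N"
      and DC: "(\<integral>\<^sup>+p. ennreal (mat_l1 k (grid_matrix k (fst p)) (grid_matrix k (snd p))) \<partial>D)
        \<le> (\<integral>\<^sup>+p. ennreal (mat_l1 k (fst p) (snd p)) \<partial>C) + ennreal (4 * real (k^2) / real (Suc n))"
      using couplings_grid_lift[OF pM pN sM sN L(1) C] by blast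
    have "W_box M N \<le> (SUP (S, T)\<in>{(S, T). is_interval S \<and> S \<subseteq> {0..1} \<and> is_interval T \<and> T \<subseteq> {0..1}}.
        \<integral>\<^sup>+p. ennreal \<bar>measure (fst p) (S \<times> T) - measure (snd p) (S \<times> T)\<bar> \<partial>D)"
      unfolding W_box_def by (rule INF_lower[OF D])
    also have "\<dots> \<le> (\<integral>\<^sup>+p. ennreal (mat_l1 k (grid_matrix k (fst p)) (grid_matrix k (snd p))) \<partial>D) + ennreal (4 / real k)"
      by (rule SUP_least) (auto intro!: nn_integral_box_le_grid[OF D sM sN mM mN k])
    also have "\<dots> \<le> (\<integral>\<^sup>+p. ennreal (mat_l1 k (fst p) (snd p)) \<partial>C) + ?c"
      using add_right_mono[OF DC, of "ennreal (4 / real k)"] by (simp only: add.assoc)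
    finally show ?thesis .
  qed
  then have "W_box M N \<le> (INF C\<in>couplings (G_law k M) (G_law k N). (\<integral>\<^sup>+p. ennreal (mat_l1 k (fst p) (snd p)) \<partial>C) + ?c)"
    by (rule INF_greatest)
  also have "\<dots> = W_1 k (G_law k M) (G_law k N) + ?c"
    unfolding W_1_eq_INF by (rule INF_add_const_ennreal)
  also have "\<dots> \<le> W_1 k (G_law k M) (G_law k N) + (ennreal e + ennreal (4 / real k))"
    using L(2) by (intro add_left_mono add_right_mono ennreal_leI)
  also have "\<dots> = W_1 k (G_law k M) (G_law k N) + ennreal (4 / real k) + ennreal e"
    by (simp only: ac_simps)
  finally show "W_box M N \<le> W_1 k (G_law k M) (G_law k N) + ennreal (4 / real k) + ennreal e" .
qed

theorem mainTheorem4: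
  fixes M N :: "(real \<times> real) measure measure" and k :: nat
  assumes "M \<in> grapheurs" and "N \<in> grapheurs" and "k \<ge> 1"
  shows "W_1 k (G_law k M) (G_law k N) \<le> of_nat (k^2) * W_box M N \<and>
         W_box M N \<le> W_1 k (G_law k M) (G_law k N) + ennreal (4 / real k)"
proof
  note M = grapheursD[OF assms(1)] and N = grapheursD[OF assms(2)]
  show "W_1 k (G_law k M) (G_law k N) \<le> of_nat (k^2) * W_box M N"
    by (rule W_1_le_W_box[OF M(2) N(2) assms(3)])
  show "W_box M N \<le> W_1 k (G_law k M) (G_law k N) + ennreal (4 / real k)"
    by (rule W_box_le_W_1[OF M(1) N(1) M(2) N(2) M(3) N(3) assms(3)])
qed

end
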